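(* Given a triangle-free plane graph $G$ (represented by rotation-ordered doubly linked adjacency lists) and a vertex $v\in V(G)$, it can be decided in constant time whether $G$ has a secure multigram with pivot $v$.
   Context: Representation: for each vertex, its neighbors are listed in the clockwise cyclic order around it, and the two occurrences of each edge are linked to each other. All graphs are finite and simple; a plane graph is drawn in the plane without crossings. A cycle is facial if it bounds a face of some connected component of $G$. A vertex is big if it has degree at least $60$, and small otherwise; here "admissible" means small, "forbidden" means big. Multigrams: a monogram is $(v_1)$ with $\deg(v_1)\le 2$. A tetragram (resp. hexagram) is a sequence $(v_1,\dots,v_4)$ (resp. $(v_1,\dots,v_6)$) of vertices forming a facial cycle in that order. A pentagram is a sequence $(v_1,\dots,v_5)$ forming a facial cycle in that order with $v_1,\dots,v_4$ of degree exactly $3$. A decagram is a pentagram with $\deg(v_5)=3$; an octagram is a tetragram all of whose vertices have degree $3$. The pivot is $v_1$. For pentagrams and decagrams, $x_i$ ($i=1,\dots,4$) is the neighbor of $v_i$ other than $v_{i-1},v_{i+1}$ ($v_0=v_5$). Secure multigrams: a monogram is always secure. A tetragram is secure if every path in $G$ of length at most $3$ with ends $v_1,v_3$ lies in the cycle $v_1v_2v_3v_4$ (safety), $v_1$ is small of degree exactly $3$, the neighbor $x$ of $v_1$ other than $v_2,v_4$ is small, and either $v_3$ is small or every neighbor $w$ of $x$ is small or lies on a $4$-face $v_1v_2wx$ or $v_1v_4wx$. An octagram is secure if $v_1,\dots,v_4$ are small. A decagram is secure if $x_1,x_3$ are distinct, non-adjacent, have no common neighbor, and $v_1,\dots,v_5,x_1,x_3$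 are small. A pentagram is secure if $x_1,\dots,x_4$ are pairwise distinct and non-adjacent, there is no path in $G\setminus\{v_1,\dots,v_4\}$ of length at most $3$ from $x_2$ to $v_5$, every path in $G\setminus\{v_1,\dots,v_4\}$ of length at most $3$ from $x_3$ to $x_4$ has length exactly $2$ and with $x_3v_3v_4x_4$ forms a facial $5$-cycle, the vertices $v_1,\dots,v_5,x_1,\dots,x_4$ are small, at least one of $v_5,x_2$ has no big neighbor, and at least one of $x_3,x_4$ has no big neighbor. A hexagram is secure if every path of length at most $3$ in $G$ between $v_1$ and $v_3$ is $v_1v_2v_3$, $v_1,v_3,v_6$ are small, $v_1$ has degree exactly $3$, and the neighbor of $v_1$ other than $v_2,v_6$ is small. *)

theory Defs
  imports Main
begin

text \<open>Each dart d is one occurrence of an edge in the adjacency list of its tail vertex.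
  twin links the two occurrences of an edge, succ gives the next entry in the clockwise
  cyclic order around the tail (its inverse, the previous entry, is also accessible).\<close>

record ('v, 'd) rotsys =
  verts :: "'v set"
  darts :: "'d set"
  tail  :: "'d \<Rightarrow> 'v"
  twin  :: "'d \<Rightarrow> 'd"
  succ  :: "'d \<Rightarrow> 'd"

definition pred_dart :: "('v, 'd) rotsys \<Rightarrow> 'd \<Rightarrow> 'd" where
  "pred_dart G = inv_into (darts G) (succ G)"

definition wf_rotsys :: "('v, 'd) rotsys \<Rightarrow> bool" where
  "wf_rotsys G \<longleftrightarrow>
     finite (verts G) \<and> finite (darts G) \<and>
     (\<forall>d\<in>darts G. tail G d \<in> verts G \<and> twin G d \<in> darts G \<and> twin G d \<noteq> d \<and>
                   twin G (twin G d) = d \<and> succ G d \<in> darts G \<and> tail G (succ G d) = tail G d) \<and>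
     bij_betw (succ G) (darts G) (darts G) \<and>
     (\<forall>d\<in>darts G. \<forall>d'\<in>darts G. tail G d = tail G d' \<longrightarrow> (\<exists>n. (succ G ^^ n) d = d'))"

definition head :: "('v, 'd) rotsys \<Rightarrow> 'd \<Rightarrow> 'v" where
  "head G d = tail G (twin G d)"

definition simple_rotsys :: "('v, 'd) rotsys \<Rightarrow> bool" where
  "simple_rotsys G \<longleftrightarrow>
     (\<forall>d\<in>darts G. head G d \<noteq> tail G d) \<and>
     (\<forall>d\<in>darts G. \<forall>d'\<in>darts G. tail G d = tail G d' \<and> head G d = head G d' \<longrightarrow> d = d')"

definition adj :: "('v, 'd) rotsys \<Rightarrow> 'v \<Rightarrow> 'v \<Rightarrow> bool" where
  "adj G u w \<longleftrightarrow> (\<exists>d\<in>darts G. tail G d = u \<and> head G d = w)"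

definition deg :: "('v, 'd) rotsys \<Rightarrow> 'v \<Rightarrow> nat" where
  "deg G v = card {d\<in>darts G. tail G d = v}"

text \<open>Face traversal permutation: faces are the orbits of phi.\<close>
definition phi :: "('v, 'd) rotsys \<Rightarrow> 'd \<Rightarrow> 'd" where
  "phi G d = succ G (twin G d)"

definition face_orbit :: "('v, 'd) rotsys \<Rightarrow> 'd \<Rightarrow> 'd set" where
  "face_orbit G d = {(phi G ^^ n) d | n. True}"

definition component :: "('v, 'd) rotsys \<Rightarrow> 'v \<Rightarrow> 'v set" where
  "component G u = {w. (u, w) \<in> {(a, b). adj G a b}\<^sup>*}"

text \<open>Plane: every connected component with at least one edge satisfies Euler's formula
  V - E + F = 2 (written as 2V - |darts| + 2F = 4), i.e. the rotation system is a
  genus-0 embedding of each component.\<close>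
definition plane_rotsys :: "('v, 'd) rotsys \<Rightarrow> bool" where
  "plane_rotsys G \<longleftrightarrow> wf_rotsys G \<and> simple_rotsys G \<and>
     (\<forall>d0\<in>darts G.
        let C = component G (tail G d0);
            DC = {d\<in>darts G. tail G d \<in> C};
            FC = face_orbit G ` DC
        in 2 * int (card C) - int (card DC) + 2 * int (card FC) = 4)"

definition triangle_free :: "('v, 'd) rotsys \<Rightarrow> bool" where
  "triangle_free G \<longleftrightarrow> \<not> (\<exists>a b c. adj G a b \<and> adj G b c \<and> adj G c a)"

text \<open>A path is a nonempty list of distinct vertices, consecutive ones adjacent;
  its length is the number of edges, length ps - 1.\<close>
definition gpath :: "('v, 'd) rotsys \<Rightarrow> 'v list \<Rightarrow> bool" where
  "gpath G ps \<longleftrightarrow> ps \<noteq> [] \<and> distinct ps \<and> set ps \<subseteq> verts G \<and>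
     (\<forall>i. Suc i < length ps \<longrightarrow> adj G (ps ! i) (ps ! Suc i))"

definition path_edges :: "'v list \<Rightarrow> 'v set set" where
  "path_edges ps = {{ps ! i, ps ! Suc i} | i. Suc i < length ps}"

definition facial_walk :: "('v, 'd) rotsys \<Rightarrow> 'v list \<Rightarrow> bool" where
  "facial_walk G vs \<longleftrightarrow> (\<exists>d\<in>darts G. (\<forall>i<length vs. tail G ((phi G ^^ i) d) = vs ! i) \<and>
                                       (phi G ^^ length vs) d = d)"

definition facial :: "('v, 'd) rotsys \<Rightarrow> 'v list \<Rightarrow> bool" where
  "facial G vs \<longleftrightarrow> length vs \<ge> 3 \<and> distinct vs \<and>
     (facial_walk G vs \<or> facial_walk G (rev vs))"

definition small :: "('v, 'd) rotsys \<Rightarrow> 'v \<Rightarrow> bool" where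
  "small G v \<longleftrightarrow> deg G v < 60"

definition big :: "('v, 'd) rotsys \<Rightarrow> 'v \<Rightarrow> bool" where
  "big G v \<longleftrightarrow> deg G v \<ge> 60"

definition no_big_nb :: "('v, 'd) rotsys \<Rightarrow> 'v \<Rightarrow> bool" where
  "no_big_nb G u \<longleftrightarrow> (\<forall>w. adj G u w \<longrightarrow> \<not> big G w)"

definition other_nb :: "('v, 'd) rotsys \<Rightarrow> 'v \<Rightarrow> 'v \<Rightarrow> 'v \<Rightarrow> 'v \<Rightarrow> bool" where
  "other_nb G v a b x \<longleftrightarrow> adj G v x \<and> x \<noteq> a \<and> x \<noteq> b"

definition monogram :: "('v, 'd) rotsys \<Rightarrow> 'v \<Rightarrow> bool" where
  "monogram G v1 \<longleftrightarrow> v1 \<in> verts G \<and> deg G v1 \<le> 2"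

definition tetragram :: "('v, 'd) rotsys \<Rightarrow> 'v \<Rightarrow> 'v \<Rightarrow> 'v \<Rightarrow> 'v \<Rightarrow> bool" where
  "tetragram G v1 v2 v3 v4 \<longleftrightarrow> facial G [v1, v2, v3, v4]"

definition secure_tetragram :: "('v, 'd) rotsys \<Rightarrow> 'v \<Rightarrow> 'v \<Rightarrow> 'v \<Rightarrow> 'v \<Rightarrow> bool" where
  "secure_tetragram G v1 v2 v3 v4 \<longleftrightarrow> tetragram G v1 v2 v3 v4 \<and>
     (\<forall>ps. gpath G ps \<and> hd ps = v1 \<and> last ps = v3 \<and> length ps \<le> 4 \<longrightarrow>
        path_edges ps \<subseteq> {{v1, v2}, {v2, v3}, {v3, v4}, {v4, v1}}) \<and>
     small G v1 \<and> deg G v1 = 3 \<and>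
     (\<exists>x. other_nb G v1 v2 v4 x \<and> small G x \<and>
        (small G v3 \<or>
         (\<forall>w. adj G x w \<longrightarrow> small G w \<or> facial G [v1, v2, w, x] \<or> facial G [v1, v4, w, x])))"

definition octagram :: "('v, 'd) rotsys \<Rightarrow> 'v \<Rightarrow> 'v \<Rightarrow> 'v \<Rightarrow> 'v \<Rightarrow> bool" where
  "octagram G v1 v2 v3 v4 \<longleftrightarrow> tetragram G v1 v2 v3 v4 \<and>
     deg G v1 = 3 \<and> deg G v2 = 3 \<and> deg G v3 = 3 \<and> deg G v4 = 3"

definition secure_octagram :: "('v, 'd) rotsys \<Rightarrow> 'v \<Rightarrow> 'v \<Rightarrow> 'v \<Rightarrow> 'v \<Rightarrow> bool" where
  "secure_octagram G v1 v2 v3 v4 \<longleftrightarrow> octagram G v1 v2 v3 v4 \<and>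
     small G v1 \<and> small G v2 \<and> small G v3 \<and> small G v4"

definition pentagram :: "('v, 'd) rotsys \<Rightarrow> 'v \<Rightarrow> 'v \<Rightarrow> 'v \<Rightarrow> 'v \<Rightarrow> 'v \<Rightarrow> bool" where
  "pentagram G v1 v2 v3 v4 v5 \<longleftrightarrow> facial G [v1, v2, v3, v4, v5] \<and>
     deg G v1 = 3 \<and> deg G v2 = 3 \<and> deg G v3 = 3 \<and> deg G v4 = 3"

definition decagram :: "('v, 'd) rotsys \<Rightarrow> 'v \<Rightarrow> 'v \<Rightarrow> 'v \<Rightarrow> 'v \<Rightarrow> 'v \<Rightarrow> bool" where
  "decagram G v1 v2 v3 v4 v5 \<longleftrightarrow> pentagram G v1 v2 v3 v4 v5 \<and> deg G v5 = 3"

definition secure_decagram :: "('v, 'd) rotsys \<Rightarrow> 'v \<Rightarrow> 'v \<Rightarrow> 'v \<Rightarrow> 'v \<Rightarrow> 'v \<Rightarrow> bool" where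
  "secure_decagram G v1 v2 v3 v4 v5 \<longleftrightarrow> decagram G v1 v2 v3 v4 v5 \<and>
     (\<exists>x1 x3. other_nb G v1 v5 v2 x1 \<and> other_nb G v3 v2 v4 x3 \<and>
        x1 \<noteq> x3 \<and> \<not> adj G x1 x3 \<and> \<not> (\<exists>w. adj G x1 w \<and> adj G x3 w) \<and>
        small G v1 \<and> small G v2 \<and> small G v3 \<and> small G v4 \<and> small G v5 \<and>
        small G x1 \<and> small G x3)"

definition secure_pentagram :: "('v, 'd) rotsys \<Rightarrow> 'v \<Rightarrow> 'v \<Rightarrow> 'v \<Rightarrow> 'v \<Rightarrow> 'v \<Rightarrow> bool" where
  "secure_pentagram G v1 v2 v3 v4 v5 \<longleftrightarrow> pentagram G v1 v2 v3 v4 v5 \<and>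
     (\<exists>x1 x2 x3 x4.
        other_nb G v1 v5 v2 x1 \<and> other_nb G v2 v1 v3 x2 \<and>
        other_nb G v3 v2 v4 x3 \<and> other_nb G v4 v3 v5 x4 \<and>
        distinct [x1, x2, x3, x4] \<and>
        (\<forall>a\<in>{x1, x2, x3, x4}. \<forall>b\<in>{x1, x2, x3, x4}. \<not> adj G a b) \<and>
        \<not> (\<exists>ps. gpath G ps \<and> set ps \<inter> {v1, v2, v3, v4} = {} \<and>
               hd ps = x2 \<and> last ps = v5 \<and> length ps \<le> 4) \<and>
        (\<forall>ps. gpath G ps \<and> set ps \<inter> {v1, v2, v3, v4} = {} \<and>
               hd ps = x3 \<and> last ps = x4 \<and> length ps \<le> 4 \<longrightarrow>
               length ps = 3 \<and> facial G [x3, v3, v4, x4, ps ! 1]) \<and>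
        small G v1 \<and> small G v2 \<and> small G v3 \<and> small G v4 \<and> small G v5 \<and>
        small G x1 \<and> small G x2 \<and> small G x3 \<and> small G x4 \<and>
        (no_big_nb G v5 \<or> no_big_nb G x2) \<and>
        (no_big_nb G x3 \<or> no_big_nb G x4))"

definition hexagram :: "('v, 'd) rotsys \<Rightarrow> 'v \<Rightarrow> 'v \<Rightarrow> 'v \<Rightarrow> 'v \<Rightarrow> 'v \<Rightarrow> 'v \<Rightarrow> bool" where
  "hexagram G v1 v2 v3 v4 v5 v6 \<longleftrightarrow> facial G [v1, v2, v3, v4, v5, v6]"

definition secure_hexagram :: "('v, 'd) rotsys \<Rightarrow> 'v \<Rightarrow> 'v \<Rightarrow> 'v \<Rightarrow> 'v \<Rightarrow> 'v \<Rightarrow> 'v \<Rightarrow> bool" where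
  "secure_hexagram G v1 v2 v3 v4 v5 v6 \<longleftrightarrow> hexagram G v1 v2 v3 v4 v5 v6 \<and>
     (\<forall>ps. gpath G ps \<and> hd ps = v1 \<and> last ps = v3 \<and> length ps \<le> 4 \<longrightarrow> ps = [v1, v2, v3]) \<and>
     small G v1 \<and> small G v3 \<and> small G v6 \<and> deg G v1 = 3 \<and>
     (\<exists>x. other_nb G v1 v2 v6 x \<and> small G x)"

definition has_secure_multigram :: "('v, 'd) rotsys \<Rightarrow> 'v \<Rightarrow> bool" where
  "has_secure_multigram G v \<longleftrightarrow>
     monogram G v \<or>
     (\<exists>v2 v3 v4. secure_tetragram G v v2 v3 v4) \<or>
     (\<exists>v2 v3 v4. secure_octagram G v v2 v3 v4) \<or>
     (\<exists>v2 v3 v4 v5. secure_pentagram G v v2 v3 v4 v5) \<or>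
     (\<exists>v2 v3 v4 v5. secure_decagram G v v2 v3 v4 v5) \<or>
     (\<exists>v2 v3 v4 v5 v6. secure_hexagram G v v2 v3 v4 v5 v6)"

text \<open>An algorithm is a finite query tree operating on the list representation. Its
  state is a list of list-entries (darts) reached so far, starting from the head of the
  adjacency list of v (or the empty state if that list is empty).
  As the tree is a fixed finite object, the number of steps is bounded by a constant
  independent of the input graph.\<close>

datatype qtree =
    Leaf bool
  | Nxt nat qtree
  | Prv nat qtree
  | Twn nat qtree
  | EqDart nat nat qtree qtree
  | EqVert nat nat qtree qtree
  | IsNil qtree qtree

fun run :: "('v, 'd) rotsys \<Rightarrow> qtree \<Rightarrow> 'd list \<Rightarrow> bool" where
  "run G (Leaf b) ds = b"
| "run G (Nxt i t) ds = (i < length ds \<and> run G t (ds @ [succ G (ds ! i)]))"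
| "run G (Prv i t) ds = (i < length ds \<and> run G t (ds @ [pred_dart G (ds ! i)]))"
| "run G (Twn i t) ds = (i < length ds \<and> run G t (ds @ [twin G (ds ! i)]))"
| "run G (EqDart i j t1 t2) ds =
     (i < length ds \<and> j < length ds \<and> (if ds ! i = ds ! j then run G t1 ds else run G t2 ds))"
| "run G (EqVert i j t1 t2) ds =
     (i < length ds \<and> j < length ds \<and>
      (if tail G (ds ! i) = tail G (ds ! j) then run G t1 ds else run G t2 ds))"
| "run G (IsNil t1 t2) ds = (if ds = [] then run G t1 ds else run G t2 ds)"

definition start_state :: "('v, 'd) rotsys \<Rightarrow> 'v \<Rightarrow> 'd list \<Rightarrow> bool" where
  "start_state G v ds \<longleftrightarrow>
     (ds = [] \<and> (\<forall>d\<in>darts G. tail G d \<noteq> v)) \<or>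
     (\<exists>d\<in>darts G. tail G d = v \<and> ds = [d])"

end

theory Submission
  imports Defs
begin

(*
  A constant-time algorithm is a fixed finite query tree, so it suffices to express "v is the
  pivot of a secure multigram" as a query: a Boolean combination of equality tests between darts,
  or their tails, reached from a dart at v by a bounded number of next/twin steps.  Faces through
  v are found among the first 60 rotations of the start dart, and a quantifier over the neighbours
  of a small vertex (degree below 60) becomes a finite conjunction or disjunction over its first
  60 rotations.  All vertices whose neighbourhoods the definitions quantify over are small, and an
  adjacency test is exact as soon as one endpoint is small.  The two tests between possibly big
  vertices are settled otherwise: a neighbour w of x in a tetragram is either small, or lies on a
  4-face with v2 or v4, and then triangle-freeness already rules out an edge to v3; and for the
  paths avoiding a pentagram one endpoint has no big neighbour.  Compiling the
  query, in continuation-passing style, into a query tree gives the constant-time procedure.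
*)

section \<open>Queries and their compilation into query trees\<close>

datatype dart_term = Start | Next dart_term | Twin dart_term

datatype query =
    QTrue
  | Same_dart dart_term dart_term
  | Same_vertex dart_term dart_term
  | QNot query
  | QAnd query query
  | QOr query query

primrec dart_of :: "('v, 'd) rotsys \<Rightarrow> 'd \<Rightarrow> dart_term \<Rightarrow> 'd" where
  "dart_of G d Start = d"
| "dart_of G d (Next t) = succ G (dart_of G d t)"
| "dart_of G d (Twin t) = twin G (dart_of G d t)"

abbreviation vertex_of :: "('v, 'd) rotsys \<Rightarrow> 'd \<Rightarrow> dart_term \<Rightarrow> 'v" where
  "vertex_of G d t \<equiv> tail G (dart_of G d t)"

primrec holds :: "('v, 'd) rotsys \<Rightarrow> 'd \<Rightarrow> query \<Rightarrow> bool" where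
  "holds G d QTrue = True"
| "holds G d (Same_dart a b) = (dart_of G d a = dart_of G d b)"
| "holds G d (Same_vertex a b) = (vertex_of G d a = vertex_of G d b)"
| "holds G d (QNot q) = (\<not> holds G d q)"
| "holds G d (QAnd p q) = (holds G d p \<and> holds G d q)"
| "holds G d (QOr p q) = (holds G d p \<or> holds G d q)"

text \<open>Compilation into query trees, in continuation-passing style: with n entries stored, the
  continuation of a term receives the position of the entry holding its dart and the new number
  of stored entries; the continuations of a query receive the number of stored entries.\<close>

primrec compile_term :: "dart_term \<Rightarrow> nat \<Rightarrow> (nat \<Rightarrow> nat \<Rightarrow> qtree) \<Rightarrow> qtree" where
  "compile_term Start n k = k 0 n"
| "compile_term (Next t) n k = compile_term t n (\<lambda>r m. Nxt r (k m (Suc m)))"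
| "compile_term (Twin t) n k = compile_term t n (\<lambda>r m. Twn r (k m (Suc m)))"

definition compile_term_pair :: "dart_term \<Rightarrow> dart_term \<Rightarrow> nat \<Rightarrow> (nat \<Rightarrow> nat \<Rightarrow> nat \<Rightarrow> qtree) \<Rightarrow> qtree" where
  "compile_term_pair a b n k = compile_term a n (\<lambda>r1 n1. compile_term b n1 (\<lambda>r2 n2. k r1 r2 n2))"

primrec compile :: "query \<Rightarrow> nat \<Rightarrow> (nat \<Rightarrow> qtree) \<Rightarrow> (nat \<Rightarrow> qtree) \<Rightarrow> qtree" where
  "compile QTrue n kt kf = kt n"
| "compile (Same_dart a b) n kt kf = compile_term_pair a b n (\<lambda>r1 r2 m. EqDart r1 r2 (kt m) (kf m))"
| "compile (Same_vertex a b) n kt kf = compile_term_pair a b n (\<lambda>r1 r2 m. EqVert r1 r2 (kt m) (kf m))"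
| "compile (QNot q) n kt kf = compile q n kf kt"
| "compile (QAnd p q) n kt kf = compile p n (\<lambda>m. compile q m kt kf) kf"
| "compile (QOr p q) n kt kf = compile p n kt (\<lambda>m. compile q m kt kf)"

lemma run_compile_term:
  assumes "ds \<noteq> []"
  shows "\<exists>ext r. r < length ds + length ext \<and> (ds @ ext) ! r = dart_of G (hd ds) t \<and>
           run G (compile_term t (length ds) k) ds = run G (k r (length ds + length ext)) (ds @ ext)"
proof (induction t arbitrary: k)
  case Start
  show ?case using assms by (intro exI[of _ "[]"] exI[of _ 0]) (simp add: hd_conv_nth)
next
  case (Next t)
  obtain ext r where r: "r < length ds + length ext" "(ds @ ext) ! r = dart_of G (hd ds) t"
    and run: "run G (compile_term (Next t) (length ds) k) ds =
      run G (Nxt r (k (length ds + length ext) (Suc (length ds + length ext)))) (ds @ ext)"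
    using Next.IH[of "\<lambda>r m. Nxt r (k m (Suc m))"] unfolding compile_term.simps by blast
  let ?ext' = "ext @ [dart_of G (hd ds) (Next t)]"
  have "(ds @ ?ext') ! (length ds + length ext) = dart_of G (hd ds) (Next t)"
    by (metis append.assoc length_append nth_append_length)
  moreover have "run G (compile_term (Next t) (length ds) k) ds =
      run G (k (length ds + length ext) (length ds + length ?ext')) (ds @ ?ext')"
    using run r by simp
  ultimately show ?case by (intro exI[of _ ?ext'] exI[of _ "length ds + length ext"]) simp
next
  case (Twin t)
  obtain ext r where r: "r < length ds + length ext" "(ds @ ext) ! r = dart_of G (hd ds) t"
    and run: "run G (compile_term (Twin t) (length ds) k) ds =
      run G (Twn r (k (length ds + length ext) (Suc (length ds + length ext)))) (ds @ ext)"
    using Twin.IH[of "\<lambda>r m. Twn r (k m (Suc m))"] unfolding compile_term.simps by blast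
  let ?ext' = "ext @ [dart_of G (hd ds) (Twin t)]"
  have "(ds @ ?ext') ! (length ds + length ext) = dart_of G (hd ds) (Twin t)"
    by (metis append.assoc length_append nth_append_length)
  moreover have "run G (compile_term (Twin t) (length ds) k) ds =
      run G (k (length ds + length ext) (length ds + length ?ext')) (ds @ ?ext')"
    using run r by simp
  ultimately show ?case by (intro exI[of _ ?ext'] exI[of _ "length ds + length ext"]) simp
qed

lemma run_compile_term_pair:
  assumes "ds \<noteq> []"
  shows "\<exists>ext r1 r2. r1 < length (ds @ ext) \<and> r2 < length (ds @ ext) \<and>
           (ds @ ext) ! r1 = dart_of G (hd ds) a \<and> (ds @ ext) ! r2 = dart_of G (hd ds) b \<and>
           run G (compile_term_pair a b (length ds) k) ds = run G (k r1 r2 (length (ds @ ext))) (ds @ ext)"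
proof -
  obtain e1 r1 where 1: "r1 < length ds + length e1" "(ds @ e1) ! r1 = dart_of G (hd ds) a"
    "run G (compile_term_pair a b (length ds) k) ds =
     run G (compile_term b (length ds + length e1) (k r1)) (ds @ e1)"
    using run_compile_term[OF assms, of G a "\<lambda>r1 n1. compile_term b n1 (k r1)"]
    unfolding compile_term_pair_def by blast
  have "ds @ e1 \<noteq> []" and hd: "hd (ds @ e1) = hd ds" using assms by simp_all
  from run_compile_term[OF this(1), of G b "k r1"]
  obtain e2 r2 where 2: "r2 < length (ds @ e1) + length e2" "((ds @ e1) @ e2) ! r2 = dart_of G (hd ds) b"
    "run G (compile_term b (length (ds @ e1)) (k r1)) (ds @ e1) =
     run G (k r1 r2 (length (ds @ e1) + length e2)) ((ds @ e1) @ e2)"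
    unfolding hd by blast
  have "((ds @ e1) @ e2) ! r1 = dart_of G (hd ds) a"
    using 1(1,2) nth_append_left[of r1 "ds @ e1" e2] by simp
  with 1 2 show ?thesis
    by (intro exI[of _ "e1 @ e2"]) (rule exI[of _ r1], rule exI[of _ r2], simp add: add.assoc)
qed

lemma run_compile:
  assumes "ds \<noteq> []"
  shows "\<exists>ext. run G (compile q (length ds) kt kf) ds =
           (if holds G (hd ds) q then run G (kt (length (ds @ ext))) (ds @ ext)
            else run G (kf (length (ds @ ext))) (ds @ ext))"
  using assms
proof (induction q arbitrary: ds kt kf)
  case QTrue
  show ?case by (intro exI[of _ "[]"]) simp
next
  case (Same_dart a b)
  obtain ext r1 r2 where "(ds @ ext) ! r1 = dart_of G (hd ds) a" "(ds @ ext) ! r2 = dart_of G (hd ds) b"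
    "r1 < length (ds @ ext)" "r2 < length (ds @ ext)"
    "run G (compile (Same_dart a b) (length ds) kt kf) ds =
     run G (EqDart r1 r2 (kt (length (ds @ ext))) (kf (length (ds @ ext)))) (ds @ ext)"
    using run_compile_term_pair[OF Same_dart.prems, of G a b "\<lambda>r1 r2 m. EqDart r1 r2 (kt m) (kf m)"]
    unfolding compile.simps by blast
  then show ?case by (intro exI[of _ ext]) simp
next
  case (Same_vertex a b)
  obtain ext r1 r2 where "(ds @ ext) ! r1 = dart_of G (hd ds) a" "(ds @ ext) ! r2 = dart_of G (hd ds) b"
    "r1 < length (ds @ ext)" "r2 < length (ds @ ext)"
    "run G (compile (Same_vertex a b) (length ds) kt kf) ds =
     run G (EqVert r1 r2 (kt (length (ds @ ext))) (kf (length (ds @ ext)))) (ds @ ext)"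
    using run_compile_term_pair[OF Same_vertex.prems, of G a b "\<lambda>r1 r2 m. EqVert r1 r2 (kt m) (kf m)"]
    unfolding compile.simps by blast
  then show ?case by (intro exI[of _ ext]) simp
next
  case (QNot q)
  then show ?case by (metis compile.simps(4) holds.simps(4))
next
  case (QAnd p q)
  obtain e1 where 1: "run G (compile (QAnd p q) (length ds) kt kf) ds =
      (if holds G (hd ds) p then run G (compile q (length (ds @ e1)) kt kf) (ds @ e1)
       else run G (kf (length (ds @ e1))) (ds @ e1))"
    using QAnd.IH(1)[OF QAnd.prems] by fastforce
  have "ds @ e1 \<noteq> []" "hd (ds @ e1) = hd ds" using QAnd.prems by simp_all
  then obtain e2 where "run G (compile q (length (ds @ e1)) kt kf) (ds @ e1) =
      (if holds G (hd ds) q then run G (kt (length (ds @ e1 @ e2))) (ds @ e1 @ e2)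
       else run G (kf (length (ds @ e1 @ e2))) (ds @ e1 @ e2))"
    using QAnd.IH(2)[of "ds @ e1" kt kf] by (metis append_assoc)
  with 1 show ?case by (cases "holds G (hd ds) p") (auto intro: exI[of _ e1] exI[of _ "e1 @ e2"])
next
  case (QOr p q)
  obtain e1 where 1: "run G (compile (QOr p q) (length ds) kt kf) ds =
      (if holds G (hd ds) p then run G (kt (length (ds @ e1))) (ds @ e1)
       else run G (compile q (length (ds @ e1)) kt kf) (ds @ e1))"
    using QOr.IH(1)[OF QOr.prems] by fastforce
  have "ds @ e1 \<noteq> []" "hd (ds @ e1) = hd ds" using QOr.prems by simp_all
  then obtain e2 where "run G (compile q (length (ds @ e1)) kt kf) (ds @ e1) =
      (if holds G (hd ds) q then run G (kt (length (ds @ e1 @ e2))) (ds @ e1 @ e2)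
       else run G (kf (length (ds @ e1 @ e2))) (ds @ e1 @ e2))"
    using QOr.IH(2)[of "ds @ e1" kt kf] by (metis append_assoc)
  with 1 show ?case by (cases "holds G (hd ds) p") (auto intro: exI[of _ e1] exI[of _ "e1 @ e2"])
qed

definition decide :: "query \<Rightarrow> qtree" where
  "decide q = compile q 1 (\<lambda>_. Leaf True) (\<lambda>_. Leaf False)"

lemma run_decide: "run G (decide q) [d] = holds G d q"
  using run_compile[of "[d]" G q "\<lambda>_. Leaf True" "\<lambda>_. Leaf False"]
  by (auto simp: decide_def split: if_splits)

section \<open>Rotations, degrees and neighbourhoods\<close>

abbreviation rot :: "('v, 'd) rotsys \<Rightarrow> nat \<Rightarrow> 'd \<Rightarrow> 'd" where
  "rot G k \<equiv> succ G ^^ k"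

locale rotation_system =
  fixes G :: "('v, 'd) rotsys"
  assumes wf: "wf_rotsys G"
begin

lemma finite_darts: "finite (darts G)"
  using wf unfolding wf_rotsys_def by blast

lemma succ_bij: "bij_betw (succ G) (darts G) (darts G)"
  using wf unfolding wf_rotsys_def by blast

lemma dart_facts:
  assumes "d \<in> darts G"
  shows "succ G d \<in> darts G" "tail G (succ G d) = tail G d" "twin G d \<in> darts G"
    "twin G d \<noteq> d" "twin G (twin G d) = d" "tail G d \<in> verts G"
  using assms wf unfolding wf_rotsys_def by blast+

lemma same_tail_reachable:
  "d \<in> darts G \<Longrightarrow> d' \<in> darts G \<Longrightarrow> tail G d = tail G d' \<Longrightarrow> \<exists>n. rot G n d = d'"
  using wf unfolding wf_rotsys_def by blast

lemma rot_in_darts: "d \<in> darts G \<Longrightarrow> rot G k d \<in> darts G"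
  by (induction k) (auto simp: dart_facts)

lemma tail_rot: "d \<in> darts G \<Longrightarrow> tail G (rot G k d) = tail G d"
  by (induction k) (auto simp: dart_facts rot_in_darts)

lemma dart_of_in_darts: "d \<in> darts G \<Longrightarrow> dart_of G d t \<in> darts G"
  by (induction t) (auto simp: dart_facts)

lemma phi_pow_in_darts: "d \<in> darts G \<Longrightarrow> (phi G ^^ j) d \<in> darts G"
  by (induction j) (auto simp: phi_def dart_facts)

lemma tail_phi: "d \<in> darts G \<Longrightarrow> tail G (phi G d) = head G d"
  by (simp add: phi_def head_def dart_facts)

lemma rot_returns: "d \<in> darts G \<Longrightarrow> \<exists>p>0. rot G p d = d"
proof -
  assume d: "d \<in> darts G"
  let ?N = "card (darts G)"
  have "(\<lambda>k. rot G k d) ` {0..?N} \<subseteq> darts G" using d rot_in_darts by blast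
  then have "card ((\<lambda>k. rot G k d) ` {0..?N}) < card {0..?N}"
    using card_mono[OF finite_darts] by (simp add: le_imp_less_Suc)
  then have "\<not> inj_on (\<lambda>k. rot G k d) {0..?N}"
    using card_image by (metis less_irrefl)
  then have "\<exists>i j. i < j \<and> rot G i d = rot G j d"
    unfolding inj_on_def by (metis linorder_neqE_nat)
  then obtain i j where ij: "i < j" "rot G i d = rot G j d" by blast
  have "rot G i (rot G (j - i) d) = rot G i d"
    using ij funpow_add[of i "j - i" "succ G"] by simp
  moreover have "inj_on (rot G i) (darts G)"
    using bij_betw_funpow[OF succ_bij] bij_betw_imp_inj_on by blast
  ultimately have "rot G (j - i) d = d"
    using d rot_in_darts unfolding inj_on_def by blast
  with ij show ?thesis by (intro exI[of _ "j - i"]) simp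
qed

definition period :: "'d \<Rightarrow> nat" where
  "period d = (LEAST p. p > 0 \<and> rot G p d = d)"

lemma period:
  assumes "d \<in> darts G"
  shows "period d > 0" "rot G (period d) d = d" "0 < m \<Longrightarrow> m < period d \<Longrightarrow> rot G m d \<noteq> d"
proof -
  obtain p where "p > 0 \<and> rot G p d = d" using rot_returns assms by blast
  then show "period d > 0" "rot G (period d) d = d"
    unfolding period_def by (metis (mono_tags, lifting) LeastI)+
  show "0 < m \<Longrightarrow> m < period d \<Longrightarrow> rot G m d \<noteq> d"
    unfolding period_def using not_less_Least by blast
qed

lemma darts_at_tail:
  assumes "d \<in> darts G"
  shows "{d' \<in> darts G. tail G d' = tail G d} = (\<lambda>k. rot G k d) ` {..<period d}"
proof (intro equalityI subsetI)
  fix d' assume "d' \<in> {d' \<in> darts G. tail G d' = tail G d}"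
  then obtain n where "rot G n d = d'" using same_tail_reachable assms by force
  then have "rot G (n mod period d) d = d'" using funpow_mod_eq period(2)[OF assms] by metis
  then show "d' \<in> (\<lambda>k. rot G k d) ` {..<period d}" using period(1)[OF assms] by force
qed (use assms rot_in_darts tail_rot in auto)

lemma deg_eq_period: "d \<in> darts G \<Longrightarrow> deg G (tail G d) = period d"
proof -
  assume d: "d \<in> darts G"
  have "inj_on (\<lambda>k. rot G k d) {0..<period d}"
    by (rule inj_on_funpow_least) (use period[OF d] in auto)
  then show ?thesis unfolding deg_def darts_at_tail[OF d] by (simp add: card_image atLeast0LessThan)
qed

lemma deg_le_iff:
  assumes "d \<in> darts G"
  shows "deg G (tail G d) \<le> m \<longleftrightarrow> (\<exists>k. 0 < k \<and> k \<le> m \<and> rot G k d = d)"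
proof
  assume "deg G (tail G d) \<le> m"
  then show "\<exists>k. 0 < k \<and> k \<le> m \<and> rot G k d = d"
    using period[OF assms] deg_eq_period[OF assms] by (intro exI[of _ "period d"]) simp
next
  assume "\<exists>k. 0 < k \<and> k \<le> m \<and> rot G k d = d"
  then obtain k where k: "0 < k" "k \<le> m" "rot G k d = d" by blast
  then have "period d \<le> k" using period(3)[OF assms] by (meson not_le)
  with k show "deg G (tail G d) \<le> m" using deg_eq_period[OF assms] by simp
qed

lemma dart_among_rotations:
  assumes "d \<in> darts G" "d' \<in> darts G" "tail G d' = tail G d" "deg G (tail G d) \<le> N"
  shows "\<exists>k<N. rot G k d = d'"
proof -
  have "d' \<in> {d' \<in> darts G. tail G d' = tail G d}" using assms(2,3) by simp
  then have "d' \<in> (\<lambda>k. rot G k d) ` {..<period d}" by (simp only: darts_at_tail[OF assms(1)])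
  then obtain k where "k < period d" "rot G k d = d'" by auto
  moreover have "period d \<le> N" using deg_eq_period[OF assms(1)] assms(4) by simp
  ultimately show ?thesis by (intro exI[of _ k]) simp
qed

lemma ex_dart_at_tail_iff:
  assumes "d \<in> darts G" "deg G (tail G d) \<le> N"
  shows "(\<exists>d'\<in>darts G. tail G d' = tail G d \<and> P d') \<longleftrightarrow> (\<exists>k<N. P (rot G k d))"
  using dart_among_rotations[OF assms(1) _ _ assms(2)] rot_in_darts[OF assms(1)] tail_rot[OF assms(1)]
  by metis

lemma adj_sym: "adj G u w \<Longrightarrow> adj G w u"
  unfolding adj_def head_def by (metis dart_facts(3,5))

lemma adj_in_verts: "adj G u w \<Longrightarrow> u \<in> verts G \<and> w \<in> verts G"
  unfolding adj_def head_def by (metis dart_facts(3,6))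

lemma adj_tail_head: "d \<in> darts G \<Longrightarrow> adj G (tail G d) (head G d)"
  unfolding adj_def by blast

lemma adj_iff_rotation:
  assumes "d \<in> darts G" "deg G (tail G d) \<le> N"
  shows "adj G (tail G d) w \<longleftrightarrow> (\<exists>k<N. head G (rot G k d) = w)"
  using ex_dart_at_tail_iff[OF assms, of "\<lambda>d'. head G d' = w"] unfolding adj_def by auto

lemma all_nbrs_iff_rotation:
  "d \<in> darts G \<Longrightarrow> deg G (tail G d) \<le> N \<Longrightarrow>
     (\<forall>k<N. P (head G (rot G k d))) \<longleftrightarrow> (\<forall>w. adj G (tail G d) w \<longrightarrow> P w)"
  using adj_iff_rotation by metis

lemma ex_nbr_iff_rotation:
  "d \<in> darts G \<Longrightarrow> deg G (tail G d) \<le> N \<Longrightarrow>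
     (\<exists>k<N. P (head G (rot G k d))) \<longleftrightarrow> (\<exists>w. adj G (tail G d) w \<and> P w)"
  using adj_iff_rotation by metis

end

locale simple_rotation_system = rotation_system +
  assumes simple: "simple_rotsys G"
begin

lemma not_adj_self: "\<not> adj G u u"
  using simple unfolding adj_def simple_rotsys_def by metis

lemma adj_neq: "adj G u w \<Longrightarrow> u \<noteq> w"
  using not_adj_self by blast

lemma card_nbrs: "card {w. adj G u w} = deg G u"
proof -
  have "inj_on (head G) {d \<in> darts G. tail G d = u}"
    using simple unfolding simple_rotsys_def inj_on_def by blast
  moreover have "head G ` {d \<in> darts G. tail G d = u} = {w. adj G u w}"
    unfolding adj_def by auto
  ultimately show ?thesis unfolding deg_def using card_image by force
qed

lemma finite_nbrs: "finite {w. adj G u w}"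
proof -
  have "{w. adj G u w} = head G ` {d \<in> darts G. tail G d = u}" unfolding adj_def by auto
  then show ?thesis using finite_darts by simp
qed

lemma nbrs_of_deg3:
  assumes "deg G u = 3" "adj G u a" "adj G u b" "adj G u c" "distinct [a, b, c]" "adj G u w"
  shows "w = a \<or> w = b \<or> w = c"
proof -
  have "{a, b, c} = {w. adj G u w}"
    using assms card_nbrs[of u] finite_nbrs[of u] by (intro card_subset_eq) auto
  then show ?thesis using assms(6) by auto
qed

end

locale triangle_free_rotation_system = simple_rotation_system +
  assumes triangle_free: "triangle_free G"
begin

lemma no_triangle: "adj G a b \<Longrightarrow> adj G b c \<Longrightarrow> adj G c a \<Longrightarrow> False"
  using triangle_free unfolding triangle_free_def by blast

end

definition q_false :: query where
  "q_false = QNot QTrue"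

primrec q_ex :: "nat \<Rightarrow> (nat \<Rightarrow> query) \<Rightarrow> query" where
  "q_ex 0 f = q_false"
| "q_ex (Suc n) f = QOr (q_ex n f) (f n)"

definition q_all :: "nat \<Rightarrow> (nat \<Rightarrow> query) \<Rightarrow> query" where
  "q_all n f = QNot (q_ex n (\<lambda>k. QNot (f k)))"

primrec q_conj :: "query list \<Rightarrow> query" where
  "q_conj [] = QTrue"
| "q_conj (q # qs) = QAnd q (q_conj qs)"

definition q_imp :: "query \<Rightarrow> query \<Rightarrow> query" where
  "q_imp p q = QOr (QNot p) q"

lemma holds_q_false [simp]: "\<not> holds G d q_false"
  by (simp add: q_false_def)

lemma holds_q_ex [simp]: "holds G d (q_ex n f) \<longleftrightarrow> (\<exists>k<n. holds G d (f k))"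
  by (induction n) (auto simp: less_Suc_eq)

lemma holds_q_all [simp]: "holds G d (q_all n f) \<longleftrightarrow> (\<forall>k<n. holds G d (f k))"
  by (simp add: q_all_def)

lemma holds_q_conj [simp]: "holds G d (q_conj qs) \<longleftrightarrow> (\<forall>q\<in>set qs. holds G d q)"
  by (induction qs) auto

lemma holds_q_imp [simp]: "holds G d (q_imp p q) \<longleftrightarrow> (holds G d p \<longrightarrow> holds G d q)"
  by (simp add: q_imp_def)

declare q_ex.simps [simp del]

definition nexts :: "nat \<Rightarrow> dart_term \<Rightarrow> dart_term" where
  "nexts k t = (Next ^^ k) t"

definition face_nexts :: "nat \<Rightarrow> dart_term \<Rightarrow> dart_term" where
  "face_nexts j t = ((\<lambda>t. Next (Twin t)) ^^ j) t"

definition nbr :: "nat \<Rightarrow> dart_term \<Rightarrow> dart_term" where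
  "nbr k t = Twin (nexts k t)"

lemma dart_of_nexts [simp]: "dart_of G d (nexts k t) = rot G k (dart_of G d t)"
  unfolding nexts_def by (induction k) auto

lemma dart_of_face_nexts [simp]: "dart_of G d (face_nexts j t) = (phi G ^^ j) (dart_of G d t)"
  unfolding face_nexts_def by (induction j) (auto simp: phi_def)

lemma dart_of_nbr [simp]: "dart_of G d (nbr k t) = twin G (rot G k (dart_of G d t))"
  by (simp add: nbr_def)

lemma tail_twin [simp]: "tail G (twin G e) = head G e"
  by (simp add: head_def)

text \<open>A vertex is small iff its rotation closes up within 59 steps, so the first 60 rotations of
  a dart at a small vertex enumerate all darts, and hence all neighbours, of that vertex.\<close>

definition small_q :: "dart_term \<Rightarrow> query" where
  "small_q t = q_ex 59 (\<lambda>k. Same_dart (nexts (Suc k) t) t)"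

definition deg_le2_q :: "dart_term \<Rightarrow> query" where
  "deg_le2_q t = QOr (Same_dart (nexts 1 t) t) (Same_dart (nexts 2 t) t)"

definition deg3_q :: "dart_term \<Rightarrow> query" where
  "deg3_q t = QAnd (Same_dart (nexts 3 t) t) (QNot (deg_le2_q t))"

definition adj_q :: "dart_term \<Rightarrow> dart_term \<Rightarrow> query" where
  "adj_q a b = q_ex 60 (\<lambda>k. Same_vertex (nbr k a) b)"

definition no_big_nbr_q :: "dart_term \<Rightarrow> query" where
  "no_big_nbr_q t = q_all 60 (\<lambda>k. small_q (nbr k t))"

definition distinct_q :: "dart_term list \<Rightarrow> query" where
  "distinct_q ts = q_conj [QNot (Same_vertex (ts ! i) (ts ! j)). i \<leftarrow> [0..<length ts], j \<leftarrow> [Suc i..<length ts]]"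

lemma holds_distinct_q [simp]:
  "holds G d (distinct_q ts) \<longleftrightarrow> distinct (map (vertex_of G d) ts)"
proof -
  have "holds G d (distinct_q ts) \<longleftrightarrow>
      (\<forall>i<length ts. \<forall>j. Suc i \<le> j \<and> j < length ts \<longrightarrow> vertex_of G d (ts ! i) \<noteq> vertex_of G d (ts ! j))"
    unfolding distinct_q_def by auto
  also have "\<dots> \<longleftrightarrow> distinct (map (vertex_of G d) ts)"
    unfolding distinct_conv_nth by (auto, metis linorder_neqE_nat Suc_leI)
  finally show ?thesis .
qed

lemma ex_pos_le_2: "(\<exists>k::nat. 0 < k \<and> k \<le> 2 \<and> P k) \<longleftrightarrow> P 1 \<or> P 2"
  by (auto simp: numeral_eq_Suc le_Suc_eq)

lemma ex_pos_le_Suc: "(\<exists>k::nat. 0 < k \<and> k \<le> n \<and> P k) \<longleftrightarrow> (\<exists>k<n. P (Suc k))"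
  by (metis Suc_le_eq Suc_pred zero_less_Suc)

context rotation_system
begin

lemma small_iff_rotation: "d \<in> darts G \<Longrightarrow> small G (tail G d) \<longleftrightarrow> (\<exists>k<59. rot G (Suc k) d = d)"
  unfolding small_def using deg_le_iff[of d 59] ex_pos_le_Suc by auto

lemma holds_small_q [simp]: "d \<in> darts G \<Longrightarrow> holds G d (small_q t) \<longleftrightarrow> small G (vertex_of G d t)"
  unfolding small_q_def by (simp add: small_iff_rotation dart_of_in_darts)

lemma holds_deg_le2_q: "d \<in> darts G \<Longrightarrow> holds G d (deg_le2_q t) \<longleftrightarrow> deg G (vertex_of G d t) \<le> 2"
  unfolding deg_le2_q_def by (simp add: deg_le_iff dart_of_in_darts ex_pos_le_2)

lemma rot_deg: "d \<in> darts G \<Longrightarrow> rot G (deg G (tail G d)) d = d"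
  using deg_eq_period period(2) by simp

lemma holds_deg3_q [simp]:
  assumes "d \<in> darts G"
  shows "holds G d (deg3_q t) \<longleftrightarrow> deg G (vertex_of G d t) = 3"
proof -
  have e: "dart_of G d t \<in> darts G" using dart_of_in_darts[OF assms] .
  have "deg G (vertex_of G d t) = 3 \<longleftrightarrow>
      rot G 3 (dart_of G d t) = dart_of G d t \<and> \<not> deg G (vertex_of G d t) \<le> 2"
    using rot_deg[OF e] deg_le_iff[OF e, of 3] by auto
  then show ?thesis unfolding deg3_q_def by (simp add: holds_deg_le2_q[OF assms])
qed

lemma holds_adj_q_imp_adj:
  assumes "d \<in> darts G" "holds G d (adj_q a b)"
  shows "adj G (vertex_of G d a) (vertex_of G d b)"
proof -
  obtain k where "head G (rot G k (dart_of G d a)) = vertex_of G d b"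
    using assms(2) unfolding adj_q_def by auto
  then show ?thesis
    using adj_tail_head[OF rot_in_darts[OF dart_of_in_darts[OF assms(1)]], of k a]
      tail_rot[OF dart_of_in_darts[OF assms(1)]] by simp
qed

lemma holds_adj_q:
  "d \<in> darts G \<Longrightarrow> small G (vertex_of G d a) \<Longrightarrow>
     holds G d (adj_q a b) \<longleftrightarrow> adj G (vertex_of G d a) (vertex_of G d b)"
  unfolding adj_q_def small_def
  by (simp add: adj_iff_rotation[of _ 60] dart_of_in_darts eq_commute)

lemma holds_no_big_nbr_q:
  assumes "d \<in> darts G" "small G (vertex_of G d t)"
  shows "holds G d (no_big_nbr_q t) \<longleftrightarrow> no_big_nb G (vertex_of G d t)"
proof -
  have "holds G d (no_big_nbr_q t) \<longleftrightarrow> (\<forall>k<60. small G (head G (rot G k (dart_of G d t))))"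
    unfolding no_big_nbr_q_def using assms(1) by simp
  also have "\<dots> \<longleftrightarrow> (\<forall>w. adj G (vertex_of G d t) w \<longrightarrow> small G w)"
    using all_nbrs_iff_rotation[OF dart_of_in_darts[OF assms(1)], of t 60] assms(2)
    unfolding small_def by simp
  finally show ?thesis unfolding no_big_nb_def big_def small_def by auto
qed

end

section \<open>Faces as orbits of the face permutation\<close>

definition face_walk :: "('v, 'd) rotsys \<Rightarrow> bool \<Rightarrow> nat \<Rightarrow> nat \<Rightarrow> 'd \<Rightarrow> 'd" where
  "face_walk G fwd n j e = (phi G ^^ (if fwd then j else n - j)) e"

definition face_walk_verts :: "('v, 'd) rotsys \<Rightarrow> bool \<Rightarrow> nat \<Rightarrow> 'd \<Rightarrow> 'v list" where
  "face_walk_verts G fwd n e = map (\<lambda>j. tail G (face_walk G fwd n j e)) [0..<n]"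

lemma length_face_walk_verts [simp]: "length (face_walk_verts G fwd n e) = n"
  by (simp add: face_walk_verts_def)

lemma face_walk_verts_eq_iff:
  "length vs = n \<Longrightarrow>
     face_walk_verts G fwd n d = vs \<longleftrightarrow> (\<forall>j<n. tail G (face_walk G fwd n j d) = vs ! j)"
  by (simp add: list_eq_iff_nth_eq face_walk_verts_def)

lemma funpow_add_apply: "(f ^^ m) ((f ^^ n) x) = (f ^^ (m + n)) x"
  by (simp add: funpow_add)

lemma phi_pow_mod: "(phi G ^^ n) d = d \<Longrightarrow> (phi G ^^ a) d = (phi G ^^ (a mod n)) d"
  by (simp add: funpow_mod_eq)

context rotation_system
begin

lemma adj_face_step:
  assumes "d \<in> darts G"
  shows "adj G (tail G ((phi G ^^ a) d)) (tail G ((phi G ^^ Suc a) d))"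
proof -
  have "(phi G ^^ a) d \<in> darts G" using phi_pow_in_darts[OF assms] .
  from adj_tail_head[OF this] tail_phi[OF this] show ?thesis by simp
qed

lemma facial_walk_iff:
  "facial_walk G vs \<longleftrightarrow>
     (\<exists>d\<in>darts G. (phi G ^^ length vs) d = d \<and> face_walk_verts G True (length vs) d = vs)"
  unfolding facial_walk_def face_walk_verts_eq_iff[OF refl] face_walk_def if_True by blast

lemma face_walk_verts_backward:
  "face_walk_verts G False n d = rev (face_walk_verts G True n (phi G d))"
proof (rule nth_equalityI)
  fix j assume "j < length (face_walk_verts G False n d)"
  then have "j < n" by simp
  then have "Suc (n - Suc j) = n - j" by simp
  then have "(phi G ^^ (n - Suc j)) (phi G d) = (phi G ^^ (n - j)) d"
    by (metis comp_apply funpow_Suc_right)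
  with \<open>j < n\<close> show "face_walk_verts G False n d ! j = rev (face_walk_verts G True n (phi G d)) ! j"
    by (simp add: face_walk_verts_def face_walk_def rev_nth)
qed simp

lemma facial_walk_rev_iff:
  "facial_walk G (rev vs) \<longleftrightarrow>
     (\<exists>d\<in>darts G. (phi G ^^ length vs) d = d \<and> face_walk_verts G False (length vs) d = vs)"
proof
  let ?n = "length vs"
  assume "facial_walk G (rev vs)"
  then obtain d' where d': "d' \<in> darts G" "(phi G ^^ ?n) d' = d'" "face_walk_verts G True ?n d' = rev vs"
    unfolding facial_walk_iff by auto
  define d where "d = (phi G ^^ (?n - 1)) d'"
  have "d \<in> darts G" unfolding d_def using phi_pow_in_darts[OF d'(1)] .
  moreover have "(phi G ^^ ?n) d = d"
    unfolding d_def funpow_add_apply using d'(2) by (metis add.commute funpow_add_apply)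
  moreover have "face_walk_verts G False ?n d = vs"
  proof (cases "?n = 0")
    case False
    have "phi G d = (phi G ^^ Suc (?n - 1)) d'" unfolding d_def by simp
    also have "Suc (?n - 1) = ?n" using False by simp
    finally have "phi G d = d'" using d'(2) by simp
    then show ?thesis using d'(3) by (simp add: face_walk_verts_backward)
  qed (simp add: face_walk_verts_def)
  ultimately show "\<exists>d\<in>darts G. (phi G ^^ ?n) d = d \<and> face_walk_verts G False ?n d = vs" by blast
next
  let ?n = "length vs"
  assume "\<exists>d\<in>darts G. (phi G ^^ ?n) d = d \<and> face_walk_verts G False ?n d = vs"
  then obtain d where d: "d \<in> darts G" "(phi G ^^ ?n) d = d" "face_walk_verts G False ?n d = vs"
    by blast
  have "phi G d \<in> darts G" using phi_pow_in_darts[OF d(1), of 1] by simp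
  moreover have "(phi G ^^ ?n) (phi G d) = phi G d" using d(2) by (metis funpow_swap1)
  moreover have "face_walk_verts G True ?n (phi G d) = rev vs"
    using d(3) by (simp add: face_walk_verts_backward rev_swap)
  ultimately show "facial_walk G (rev vs)" unfolding facial_walk_iff[of "rev vs"] by auto
qed

lemma facial_iff_face_walk:
  "facial G vs \<longleftrightarrow> 3 \<le> length vs \<and> distinct vs \<and>
     (\<exists>d\<in>darts G. \<exists>fwd. (phi G ^^ length vs) d = d \<and> face_walk_verts G fwd (length vs) d = vs)"
  unfolding facial_def facial_walk_rev_iff facial_walk_iff[of vs] by (auto simp: ex_bool_eq)

lemma hd_face_walk_verts:
  "(phi G ^^ n) e = e \<Longrightarrow> 0 < n \<Longrightarrow> hd (face_walk_verts G fwd n e) = tail G e"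
  by (simp add: face_walk_verts_def face_walk_def hd_map upt_rec)

lemma facial_iff_rotation:
  assumes "d0 \<in> darts G" "deg G (tail G d0) \<le> 60"
  shows "facial G vs \<and> hd vs = tail G d0 \<longleftrightarrow> 3 \<le> length vs \<and> distinct vs \<and>
     (\<exists>i<60. \<exists>fwd. (phi G ^^ length vs) (rot G i d0) = rot G i d0 \<and>
        face_walk_verts G fwd (length vs) (rot G i d0) = vs)"
proof -
  have "facial G vs \<and> hd vs = tail G d0 \<longleftrightarrow> 3 \<le> length vs \<and> distinct vs \<and>
     (\<exists>d\<in>darts G. tail G d = tail G d0 \<and> (\<exists>fwd. (phi G ^^ length vs) d = d \<and>
        face_walk_verts G fwd (length vs) d = vs))"
  proof
    assume "facial G vs \<and> hd vs = tail G d0"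
    then obtain d fwd where "d \<in> darts G" "(phi G ^^ length vs) d = d"
        "face_walk_verts G fwd (length vs) d = vs" "3 \<le> length vs" "distinct vs" "hd vs = tail G d0"
      unfolding facial_iff_face_walk by blast
    moreover from calculation have "tail G d = hd vs"
      using hd_face_walk_verts[of "length vs" d fwd] by force
    ultimately show "3 \<le> length vs \<and> distinct vs \<and> (\<exists>d\<in>darts G. tail G d = tail G d0 \<and>
        (\<exists>fwd. (phi G ^^ length vs) d = d \<and> face_walk_verts G fwd (length vs) d = vs))"
      by auto
  next
    assume "3 \<le> length vs \<and> distinct vs \<and> (\<exists>d\<in>darts G. tail G d = tail G d0 \<and>
        (\<exists>fwd. (phi G ^^ length vs) d = d \<and> face_walk_verts G fwd (length vs) d = vs))"
    then obtain d fwd where "d \<in> darts G" "(phi G ^^ length vs) d = d" "tail G d = tail G d0"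
        "face_walk_verts G fwd (length vs) d = vs" "3 \<le> length vs" "distinct vs"
      by blast
    moreover from calculation have "tail G d = hd vs"
      using hd_face_walk_verts[of "length vs" d fwd] by force
    ultimately show "facial G vs \<and> hd vs = tail G d0" unfolding facial_iff_face_walk by auto
  qed
  then show ?thesis using ex_dart_at_tail_iff[OF assms] by simp
qed

lemma facial_adj:
  assumes "facial G vs" "j < length vs"
  shows "adj G (vs ! j) (vs ! (Suc j mod length vs))"
proof -
  let ?n = "length vs"
  obtain d fwd where d: "d \<in> darts G" "(phi G ^^ ?n) d = d" "face_walk_verts G fwd ?n d = vs"
    using assms(1) unfolding facial_iff_face_walk by blast
  have vs: "vs ! i = tail G ((phi G ^^ (if fwd then i else ?n - i)) d)" if "i < ?n" for i
    using d(3) face_walk_verts_eq_iff[where vs=vs and fwd=fwd and d=d] that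
    unfolding face_walk_def by auto
  have "?n \<ge> 3" "?n > 0" using assms unfolding facial_def by linarith+
  show ?thesis
  proof (cases fwd)
    case True
    have "(phi G ^^ (Suc j mod ?n)) d = (phi G ^^ Suc j) d" using phi_pow_mod[OF d(2)] by metis
    then show ?thesis using vs[OF assms(2)] vs[of "Suc j mod ?n"] adj_face_step[OF d(1), of j] True \<open>?n > 0\<close>
      by simp
  next
    case False
    have "Suc (?n - Suc j mod ?n) mod ?n = (?n - j) mod ?n"
      using assms(2) \<open>?n \<ge> 3\<close> by (cases "Suc j < ?n") (auto simp: Suc_diff_Suc mod_Suc)
    then have "(phi G ^^ Suc (?n - Suc j mod ?n)) d = (phi G ^^ (?n - j)) d"
      using phi_pow_mod[OF d(2)] by metis
    then show ?thesis using vs[OF assms(2)] vs[of "Suc j mod ?n"] adj_face_step[OF d(1), of "?n - Suc j mod ?n"]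
        adj_sym False \<open>?n > 0\<close>
      by simp
  qed
qed

lemma facial4_adj: "facial G [a, b, c, e] \<Longrightarrow> adj G a b \<and> adj G b c \<and> adj G c e \<and> adj G e a"
  using facial_adj[of "[a, b, c, e]" 0] facial_adj[of "[a, b, c, e]" 1]
    facial_adj[of "[a, b, c, e]" 2] facial_adj[of "[a, b, c, e]" 3] by simp

lemma facial5_adj:
  "facial G [a, b, c, e, f] \<Longrightarrow> adj G a b \<and> adj G b c \<and> adj G c e \<and> adj G e f \<and> adj G f a"
  using facial_adj[of "[a, b, c, e, f]" 0] facial_adj[of "[a, b, c, e, f]" 1]
    facial_adj[of "[a, b, c, e, f]" 2] facial_adj[of "[a, b, c, e, f]" 3]
    facial_adj[of "[a, b, c, e, f]" 4] by simp

lemma facial6_adj: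
  "facial G [a, b, c, e, f, g] \<Longrightarrow> adj G a b \<and> adj G b c \<and> adj G c e \<and> adj G e f \<and> adj G f g \<and> adj G g a"
  using facial_adj[of "[a, b, c, e, f, g]" 0] facial_adj[of "[a, b, c, e, f, g]" 1]
    facial_adj[of "[a, b, c, e, f, g]" 2] facial_adj[of "[a, b, c, e, f, g]" 3]
    facial_adj[of "[a, b, c, e, f, g]" 4] facial_adj[of "[a, b, c, e, f, g]" 5] by simp

end

definition face_walk_term :: "bool \<Rightarrow> nat \<Rightarrow> nat \<Rightarrow> dart_term \<Rightarrow> dart_term" where
  "face_walk_term fwd n j t = face_nexts (if fwd then j else n - j) t"

definition face_walk_terms :: "bool \<Rightarrow> nat \<Rightarrow> dart_term \<Rightarrow> dart_term list" where
  "face_walk_terms fwd n t = map (\<lambda>j. face_walk_term fwd n j t) [0..<n]"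

definition closes_q :: "nat \<Rightarrow> dart_term \<Rightarrow> query" where
  "closes_q n t = Same_dart (face_nexts n t) t"

definition traces_face_q :: "dart_term list \<Rightarrow> bool \<Rightarrow> nat \<Rightarrow> query" where
  "traces_face_q ts fwd i = (let n = length ts; t = nexts i (hd ts) in
     QAnd (closes_q n t) (q_conj [Same_vertex (face_walk_term fwd n j t) (ts ! j). j \<leftarrow> [0..<n]]))"

definition facial_q :: "dart_term list \<Rightarrow> query" where
  "facial_q ts = QAnd (distinct_q ts) (q_ex 60 (\<lambda>i. QOr (traces_face_q ts True i) (traces_face_q ts False i)))"

text \<open>A face of length n through the start vertex begins with one of its first 60 darts and is
  traversed in one of the two directions.\<close>

definition face_q :: "nat \<Rightarrow> (dart_term list \<Rightarrow> query) \<Rightarrow> bool \<Rightarrow> nat \<Rightarrow> query" where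
  "face_q n R fwd i = (let ts = face_walk_terms fwd n (nexts i Start) in
     q_conj [closes_q n (nexts i Start), distinct_q ts, R ts])"

definition multigram_q :: "nat \<Rightarrow> (dart_term list \<Rightarrow> query) \<Rightarrow> query" where
  "multigram_q n R = q_ex 60 (\<lambda>i. QOr (face_q n R True i) (face_q n R False i))"

lemma dart_of_face_walk_term [simp]:
  "dart_of G d (face_walk_term fwd n j t) = face_walk G fwd n j (dart_of G d t)"
  by (simp add: face_walk_term_def face_walk_def)

lemma vertices_face_walk_terms [simp]:
  "map (vertex_of G d) (face_walk_terms fwd n t) = face_walk_verts G fwd n (dart_of G d t)"
  by (simp add: face_walk_terms_def face_walk_verts_def)

lemma length_face_walk_terms [simp]: "length (face_walk_terms fwd n t) = n"
  by (simp add: face_walk_terms_def)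

lemma holds_closes_q [simp]:
  "holds G d (closes_q n t) \<longleftrightarrow> (phi G ^^ n) (dart_of G d t) = dart_of G d t"
  by (simp add: closes_q_def)

lemma holds_traces_face_q:
  "holds G d (traces_face_q ts fwd i) \<longleftrightarrow>
     (let e = rot G i (dart_of G d (hd ts)) in
      (phi G ^^ length ts) e = e \<and> face_walk_verts G fwd (length ts) e = map (vertex_of G d) ts)"
proof -
  let ?e = "rot G i (dart_of G d (hd ts))"
  have "holds G d (traces_face_q ts fwd i) \<longleftrightarrow> (phi G ^^ length ts) ?e = ?e \<and>
      (\<forall>j<length ts. tail G (face_walk G fwd (length ts) j ?e) = map (vertex_of G d) ts ! j)"
    by (auto simp: traces_face_q_def Let_def)
  moreover have "face_walk_verts G fwd (length ts) ?e = map (vertex_of G d) ts \<longleftrightarrow>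
      (\<forall>j<length ts. tail G (face_walk G fwd (length ts) j ?e) = map (vertex_of G d) ts ! j)"
    by (rule face_walk_verts_eq_iff) simp
  ultimately show ?thesis unfolding Let_def by blast
qed

context rotation_system
begin

lemma holds_facial_q:
  assumes "d \<in> darts G" "small G (vertex_of G d (hd ts))" "3 \<le> length ts"
  shows "holds G d (facial_q ts) \<longleftrightarrow> facial G (map (vertex_of G d) ts)"
proof -
  have "ts \<noteq> []" using assms(3) by auto
  then have "hd (map (vertex_of G d) ts) = vertex_of G d (hd ts)" by (simp add: hd_map)
  then show ?thesis
    using facial_iff_rotation[OF dart_of_in_darts[OF assms(1)], of "hd ts" "map (vertex_of G d) ts"]
      assms(2,3) unfolding small_def facial_q_def
    by (auto simp: holds_traces_face_q Let_def ex_bool_eq)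
qed

lemma holds_face_q:
  "holds G d (face_q n R fwd i) \<longleftrightarrow>
     (phi G ^^ n) (rot G i d) = rot G i d \<and> distinct (face_walk_verts G fwd n (rot G i d)) \<and>
     holds G d (R (face_walk_terms fwd n (nexts i Start)))"
  by (simp add: face_q_def Let_def)

lemma vertex_of_hd_face_walk_terms:
  assumes "d \<in> darts G" "(phi G ^^ n) (rot G i d) = rot G i d" "0 < n"
  shows "vertex_of G d (hd (face_walk_terms fwd n (nexts i Start))) = tail G d"
proof -
  have "face_walk_terms fwd n (nexts i Start) \<noteq> []" using assms(3) by (simp add: face_walk_terms_def)
  then have "vertex_of G d (hd (face_walk_terms fwd n (nexts i Start))) =
      hd (face_walk_verts G fwd n (rot G i d))"
    by (metis hd_map vertices_face_walk_terms dart_of_nexts dart_of.simps(1))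
  also have "\<dots> = tail G d" using hd_face_walk_verts[OF assms(2,3)] tail_rot[OF assms(1)] by simp
  finally show ?thesis .
qed

lemma holds_multigram_q:
  assumes d: "d \<in> darts G" "deg G (tail G d) \<le> 60" and n: "3 \<le> n"
    and R: "\<And>ts. length ts = n \<Longrightarrow> vertex_of G d (hd ts) = tail G d \<Longrightarrow>
              facial G (map (vertex_of G d) ts) \<Longrightarrow> holds G d (R ts) \<longleftrightarrow> S (map (vertex_of G d) ts)"
    and S_facial: "\<And>vs. S vs \<Longrightarrow> facial G vs"
  shows "holds G d (multigram_q n R) \<longleftrightarrow> (\<exists>vs. length vs = n \<and> hd vs = tail G d \<and> S vs)"
proof
  assume "holds G d (multigram_q n R)"
  then obtain i fwd where i: "i < 60" "holds G d (face_q n R fwd i)"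
    unfolding multigram_q_def by (auto simp: ex_bool_eq)
  let ?ts = "face_walk_terms fwd n (nexts i Start)"
  let ?vs = "face_walk_verts G fwd n (rot G i d)"
  have closes: "(phi G ^^ n) (rot G i d) = rot G i d" and "distinct ?vs" and "holds G d (R ?ts)"
    using i(2) unfolding holds_face_q by auto
  have hd_vs: "hd ?vs = tail G d" using hd_face_walk_verts[OF closes] n tail_rot[OF d(1)] by simp
  have "facial G ?vs" using facial_iff_rotation[OF d, of ?vs] i(1) closes \<open>distinct ?vs\<close> hd_vs n by auto
  moreover have "vertex_of G d (hd ?ts) = tail G d"
    using vertex_of_hd_face_walk_terms[OF d(1) closes] n by simp
  ultimately have "S ?vs" using R[of ?ts] \<open>holds G d (R ?ts)\<close> by simp
  with hd_vs show "\<exists>vs. length vs = n \<and> hd vs = tail G d \<and> S vs" by (intro exI[of _ ?vs]) simp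
next
  assume "\<exists>vs. length vs = n \<and> hd vs = tail G d \<and> S vs"
  then obtain vs where vs: "length vs = n" "hd vs = tail G d" "S vs" by blast
  then obtain i fwd where i: "i < 60" "(phi G ^^ n) (rot G i d) = rot G i d"
      "face_walk_verts G fwd n (rot G i d) = vs" "distinct vs"
    using facial_iff_rotation[OF d, of vs] S_facial by blast
  let ?ts = "face_walk_terms fwd n (nexts i Start)"
  have "vertex_of G d (hd ?ts) = tail G d"
    using vertex_of_hd_face_walk_terms[OF d(1) i(2)] n by simp
  then have "holds G d (R ?ts)" using R[of ?ts] vs i(3) S_facial by simp
  then have "holds G d (face_q n R fwd i)" unfolding holds_face_q using i by simp
  then show "holds G d (multigram_q n R)" unfolding multigram_q_def using i(1) by (cases fwd) auto
qed

end

lemma gpath_single [simp]: "gpath G [a] \<longleftrightarrow> a \<in> verts G"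
  unfolding gpath_def by auto

lemma gpath_Cons_Cons [simp]:
  "gpath G (a # b # ps) \<longleftrightarrow> a \<notin> set (b # ps) \<and> a \<in> verts G \<and> adj G a b \<and> gpath G (b # ps)"
  unfolding gpath_def by (auto simp: nth_Cons less_Suc_eq_0_disj split: nat.splits)

lemma path_edges_single [simp]: "path_edges [a] = {}"
  by (simp add: path_edges_def)

lemma path_edges_Cons_Cons [simp]: "path_edges (a # b # ps) = insert {a, b} (path_edges (b # ps))"
proof (intro equalityI subsetI)
  fix e assume "e \<in> path_edges (a # b # ps)"
  then obtain i where "e = {(a # b # ps) ! i, (a # b # ps) ! Suc i}" "Suc i < length (a # b # ps)"
    unfolding path_edges_def by blast
  then show "e \<in> insert {a, b} (path_edges (b # ps))"
    unfolding path_edges_def by (cases i) auto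
next
  fix e assume "e \<in> insert {a, b} (path_edges (b # ps))"
  then consider "e = {a, b}" | i where "e = {(b # ps) ! i, (b # ps) ! Suc i}" "Suc i < length (b # ps)"
    unfolding path_edges_def by blast
  then show "e \<in> path_edges (a # b # ps)"
  proof cases
    case 1
    then show ?thesis unfolding path_edges_def by (intro CollectI exI[of _ 0]) simp
  next
    case (2 i)
    then show ?thesis unfolding path_edges_def by (intro CollectI exI[of _ "Suc i"]) simp
  qed
qed

lemma all_short_paths_iff:
  "(\<forall>ps. gpath G ps \<and> hd ps = u \<and> last ps = w \<and> length ps \<le> 4 \<longrightarrow> P ps) \<longleftrightarrow>
     (u = w \<and> u \<in> verts G \<longrightarrow> P [u]) \<and> (gpath G [u, w] \<longrightarrow> P [u, w]) \<and>
     (\<forall>a. gpath G [u, a, w] \<longrightarrow> P [u, a, w]) \<and> (\<forall>a b. gpath G [u, a, b, w] \<longrightarrow> P [u, a, b, w])"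
  (is "?L \<longleftrightarrow> ?R")
proof
  assume L: ?L
  show ?R
  proof (intro conjI allI impI)
    show "P [u]" if "u = w \<and> u \<in> verts G" using that L[rule_format, of "[u]"] by auto
    show "P [u, w]" if "gpath G [u, w]" using that L[rule_format, of "[u, w]"] by simp
    show "P [u, a, w]" if "gpath G [u, a, w]" for a using that L[rule_format, of "[u, a, w]"] by simp
    show "P [u, a, b, w]" if "gpath G [u, a, b, w]" for a b
      using that L[rule_format, of "[u, a, b, w]"] by simp
  qed
next
  assume R: ?R
  show ?L
  proof (intro allI impI)
    fix ps assume ps: "gpath G ps \<and> hd ps = u \<and> last ps = w \<and> length ps \<le> 4"
    then have "ps \<noteq> []" by (auto simp: gpath_def)
    then consider a where "ps = [a]" | a b where "ps = [a, b]" | a b c where "ps = [a, b, c]"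
      | a b c e where "ps = [a, b, c, e]"
      using ps by (cases ps; cases "tl ps"; cases "tl (tl ps)"; cases "tl (tl (tl ps))") auto
    then show "P ps" using ps R by cases auto
  qed
qed

section \<open>Tetragrams\<close>

definition tetragram_cond :: "('v, 'd) rotsys \<Rightarrow> 'v \<Rightarrow> 'v \<Rightarrow> 'v \<Rightarrow> 'v \<Rightarrow> 'v \<Rightarrow> bool" where
  "tetragram_cond G v1 v2 v3 v4 x \<longleftrightarrow> x \<noteq> v2 \<and> x \<noteq> v4 \<and> small G x \<and>
     (small G v3 \<or> (\<forall>w. adj G x w \<longrightarrow> small G w \<or> facial G [v1, v2, w, x] \<or> facial G [v1, v4, w, x])) \<and>
     \<not> adj G x v3 \<and> (\<forall>b. adj G x b \<longrightarrow> b = v1 \<or> \<not> adj G b v3)"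

context triangle_free_rotation_system
begin

context
  fixes v1 v2 v3 v4 x
  assumes f: "facial G [v1, v2, v3, v4]" and dg: "deg G v1 = 3"
    and x: "adj G v1 x" "x \<noteq> v2" "x \<noteq> v4"
begin

lemma tetragram_facts:
  "adj G v1 v2" "adj G v2 v3" "adj G v3 v4" "adj G v4 v1" "distinct [v1, v2, v3, v4]"
  "\<not> adj G v1 v3" "x \<noteq> v1" "x \<noteq> v3" "v1 \<in> verts G" "v3 \<in> verts G" "x \<in> verts G"
proof -
  show a: "adj G v1 v2" "adj G v2 v3" "adj G v3 v4" "adj G v4 v1" using facial4_adj[OF f] by auto
  show "distinct [v1, v2, v3, v4]" using f unfolding facial_def by blast
  show n13: "\<not> adj G v1 v3" using no_triangle a(1,2) adj_sym by blast
  show "x \<noteq> v1" "x \<noteq> v3" using n13 x(1) adj_neq by blast+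
  show "v1 \<in> verts G" "v3 \<in> verts G" "x \<in> verts G" using adj_in_verts x(1) a by blast+
qed

lemma tetragram_v1_nbrs: "adj G v1 w \<Longrightarrow> w = v2 \<or> w = v4 \<or> w = x"
  using nbrs_of_deg3[OF dg tetragram_facts(1) adj_sym[OF tetragram_facts(4)] x(1)] tetragram_facts(5) x
  by auto

lemma tetragram_edge_at_v1: "{v1, a} \<in> {{v1, v2}, {v2, v3}, {v3, v4}, {v4, v1}} \<longleftrightarrow> a = v2 \<or> a = v4"
  using tetragram_facts(5) by (auto simp: doubleton_eq_iff)

lemma tetragram_2paths_iff:
  "(\<forall>c. gpath G [v1, c, v3] \<longrightarrow> path_edges [v1, c, v3] \<subseteq> {{v1, v2}, {v2, v3}, {v3, v4}, {v4, v1}}) \<longleftrightarrow>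
    \<not> adj G x v3"
proof
  assume H: "\<forall>c. gpath G [v1, c, v3] \<longrightarrow> path_edges [v1, c, v3] \<subseteq> {{v1, v2}, {v2, v3}, {v3, v4}, {v4, v1}}"
  show "\<not> adj G x v3"
  proof
    assume "adj G x v3"
    then have "gpath G [v1, x, v3]" using x(1) tetragram_facts by simp
    then have "{v1, x} \<in> {{v1, v2}, {v2, v3}, {v3, v4}, {v4, v1}}" using H by simp
    then show False using tetragram_edge_at_v1 x(2,3) by blast
  qed
next
  assume "\<not> adj G x v3"
  show "\<forall>c. gpath G [v1, c, v3] \<longrightarrow> path_edges [v1, c, v3] \<subseteq> {{v1, v2}, {v2, v3}, {v3, v4}, {v4, v1}}"
  proof (intro allI impI)
    fix c assume "gpath G [v1, c, v3]"
    then have "adj G v1 c" "adj G c v3" by simp_all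
    then have "c = v2 \<or> c = v4" using tetragram_v1_nbrs \<open>\<not> adj G x v3\<close> by blast
    then show "path_edges [v1, c, v3] \<subseteq> {{v1, v2}, {v2, v3}, {v3, v4}, {v4, v1}}"
      by (elim disjE) (simp_all add: insert_commute)
  qed
qed

lemma tetragram_3paths_iff:
  "(\<forall>b c. gpath G [v1, b, c, v3] \<longrightarrow>
      path_edges [v1, b, c, v3] \<subseteq> {{v1, v2}, {v2, v3}, {v3, v4}, {v4, v1}}) \<longleftrightarrow>
    (\<forall>c. adj G x c \<longrightarrow> c = v1 \<or> \<not> adj G c v3)"
proof
  assume H: "\<forall>b c. gpath G [v1, b, c, v3] \<longrightarrow>
      path_edges [v1, b, c, v3] \<subseteq> {{v1, v2}, {v2, v3}, {v3, v4}, {v4, v1}}"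
  show "\<forall>c. adj G x c \<longrightarrow> c = v1 \<or> \<not> adj G c v3"
  proof (intro allI impI disjCI)
    fix c assume c: "adj G x c" "\<not> \<not> adj G c v3"
    show "c = v1"
    proof (rule ccontr)
      assume "c \<noteq> v1"
      moreover have "c \<noteq> x" "c \<noteq> v3" "c \<in> verts G" using c adj_neq adj_in_verts by blast+
      ultimately have "gpath G [v1, x, c, v3]" using c x tetragram_facts(5,7-11) by auto
      then have "path_edges [v1, x, c, v3] \<subseteq> {{v1, v2}, {v2, v3}, {v3, v4}, {v4, v1}}" using H by blast
      then have "{v1, x} \<in> {{v1, v2}, {v2, v3}, {v3, v4}, {v4, v1}}" by simp
      then show False using tetragram_edge_at_v1 x(2,3) by blast
    qed
  qed
next
  assume H: "\<forall>c. adj G x c \<longrightarrow> c = v1 \<or> \<not> adj G c v3"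
  have "\<not> gpath G [v1, b, c, v3]" for b c
  proof
    assume "gpath G [v1, b, c, v3]"
    then have "adj G v1 b" "adj G b c" "adj G c v3" "c \<noteq> v1" by auto
    moreover have "b \<noteq> v2" "b \<noteq> v4"
      using calculation no_triangle tetragram_facts(2,3) adj_sym by blast+
    ultimately show False using tetragram_v1_nbrs H by blast
  qed
  then show "\<forall>b c. gpath G [v1, b, c, v3] \<longrightarrow>
      path_edges [v1, b, c, v3] \<subseteq> {{v1, v2}, {v2, v3}, {v3, v4}, {v4, v1}}" by blast
qed

lemma tetragram_safety_iff:
  "(\<forall>ps. gpath G ps \<and> hd ps = v1 \<and> last ps = v3 \<and> length ps \<le> 4 \<longrightarrow>
      path_edges ps \<subseteq> {{v1, v2}, {v2, v3}, {v3, v4}, {v4, v1}}) \<longleftrightarrow>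
    \<not> adj G x v3 \<and> (\<forall>b. adj G x b \<longrightarrow> b = v1 \<or> \<not> adj G b v3)"
  unfolding all_short_paths_iff tetragram_2paths_iff tetragram_3paths_iff
  using tetragram_facts(5,6) by simp

end

lemma secure_tetragram_iff:
  assumes f: "facial G [v1, v2, v3, v4]" and dg: "deg G v1 = 3"
  shows "secure_tetragram G v1 v2 v3 v4 \<longleftrightarrow> (\<exists>x. adj G v1 x \<and> tetragram_cond G v1 v2 v3 v4 x)"
proof -
  have "small G v1" using dg unfolding small_def by simp
  let ?safe = "\<forall>ps. gpath G ps \<and> hd ps = v1 \<and> last ps = v3 \<and> length ps \<le> 4 \<longrightarrow>
      path_edges ps \<subseteq> {{v1, v2}, {v2, v3}, {v3, v4}, {v4, v1}}"
  let ?C = "\<lambda>x. small G v3 \<or> (\<forall>w. adj G x w \<longrightarrow> small G w \<or> facial G [v1, v2, w, x] \<or> facial G [v1, v4, w, x])"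
  have "secure_tetragram G v1 v2 v3 v4 \<longleftrightarrow>
      ?safe \<and> (\<exists>x. adj G v1 x \<and> x \<noteq> v2 \<and> x \<noteq> v4 \<and> small G x \<and> ?C x)"
    unfolding secure_tetragram_def tetragram_def other_nb_def using f dg \<open>small G v1\<close> by simp
  also have "\<dots> \<longleftrightarrow> (\<exists>x. adj G v1 x \<and> tetragram_cond G v1 v2 v3 v4 x)"
  proof
    assume "?safe \<and> (\<exists>x. adj G v1 x \<and> x \<noteq> v2 \<and> x \<noteq> v4 \<and> small G x \<and> ?C x)"
    then obtain x where x: "?safe" "adj G v1 x" "x \<noteq> v2" "x \<noteq> v4" "small G x" "?C x" by blast
    moreover have "\<not> adj G x v3 \<and> (\<forall>b. adj G x b \<longrightarrow> b = v1 \<or> \<not> adj G b v3)"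
      by (rule iffD1[OF tetragram_safety_iff[OF f dg x(2-4)] x(1)])
    ultimately show "\<exists>x. adj G v1 x \<and> tetragram_cond G v1 v2 v3 v4 x"
      unfolding tetragram_cond_def by blast
  next
    assume "\<exists>x. adj G v1 x \<and> tetragram_cond G v1 v2 v3 v4 x"
    then obtain x where "adj G v1 x" "tetragram_cond G v1 v2 v3 v4 x" by blast
    then have x: "adj G v1 x" "x \<noteq> v2" "x \<noteq> v4" "small G x" "?C x"
      "\<not> adj G x v3 \<and> (\<forall>b. adj G x b \<longrightarrow> b = v1 \<or> \<not> adj G b v3)"
      unfolding tetragram_cond_def by blast+
    moreover have ?safe by (rule iffD2[OF tetragram_safety_iff[OF f dg x(1-3)] x(6)])
    ultimately show "?safe \<and> (\<exists>x. adj G v1 x \<and> x \<noteq> v2 \<and> x \<noteq> v4 \<and> small G x \<and> ?C x)"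
      by blast
  qed
  finally show ?thesis .
qed

end

definition adj_either_q :: "dart_term \<Rightarrow> dart_term \<Rightarrow> query" where
  "adj_either_q a b = QOr (adj_q a b) (adj_q b a)"

definition tetragram_cond_q :: "dart_term \<Rightarrow> dart_term \<Rightarrow> dart_term \<Rightarrow> dart_term \<Rightarrow> dart_term \<Rightarrow> query" where
  "tetragram_cond_q r1 r2 r3 r4 x = q_conj [QNot (Same_vertex x r2), QNot (Same_vertex x r4), small_q x,
     QOr (small_q r3) (q_all 60 (\<lambda>m. QOr (small_q (nbr m x))
       (QOr (facial_q [r1, r2, nbr m x, x]) (facial_q [r1, r4, nbr m x, x])))),
     QNot (adj_q x r3),
     q_all 60 (\<lambda>m. QOr (Same_vertex (nbr m x) r1) (QNot (adj_either_q (nbr m x) r3)))]"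

definition tetragram_q :: "dart_term \<Rightarrow> dart_term \<Rightarrow> dart_term \<Rightarrow> dart_term \<Rightarrow> query" where
  "tetragram_q r1 r2 r3 r4 = q_ex 60 (\<lambda>k. tetragram_cond_q r1 r2 r3 r4 (nbr k r1))"

context rotation_system
begin

lemma holds_adj_either_q_imp_adj:
  "d \<in> darts G \<Longrightarrow> holds G d (adj_either_q a b) \<Longrightarrow> adj G (vertex_of G d a) (vertex_of G d b)"
  unfolding adj_either_q_def using holds_adj_q_imp_adj adj_sym by auto

lemma holds_adj_either_q:
  "d \<in> darts G \<Longrightarrow> small G (vertex_of G d a) \<or> small G (vertex_of G d b) \<Longrightarrow>
     holds G d (adj_either_q a b) \<longleftrightarrow> adj G (vertex_of G d a) (vertex_of G d b)"
proof -
  assume d: "d \<in> darts G" and "small G (vertex_of G d a) \<or> small G (vertex_of G d b)"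
  then have "(holds G d (adj_q a b) \<longleftrightarrow> adj G (vertex_of G d a) (vertex_of G d b)) \<or>
      (holds G d (adj_q b a) \<longleftrightarrow> adj G (vertex_of G d b) (vertex_of G d a))"
    using holds_adj_q[OF d] by blast
  then show ?thesis
    unfolding adj_either_q_def holds.simps
    using holds_adj_q_imp_adj[OF d, of a b] holds_adj_q_imp_adj[OF d, of b a] adj_sym by blast
qed

lemma vertex_of_nbr_adj: "d \<in> darts G \<Longrightarrow> adj G (vertex_of G d t) (vertex_of G d (nbr m t))"
  using adj_tail_head[OF rot_in_darts[OF dart_of_in_darts]] tail_rot[OF dart_of_in_darts] by simp

lemma all_nbr_terms_iff:
  assumes "d \<in> darts G" "small G (vertex_of G d t)"
  shows "(\<forall>m<60. P (vertex_of G d (nbr m t))) \<longleftrightarrow> (\<forall>w. adj G (vertex_of G d t) w \<longrightarrow> P w)"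
  using all_nbrs_iff_rotation[OF dart_of_in_darts[OF assms(1)], of t 60 P] assms(2)
  unfolding small_def by simp

lemma ex_nbr_terms_iff:
  assumes "d \<in> darts G" "deg G (vertex_of G d t) \<le> 60"
  shows "(\<exists>m<60. P (vertex_of G d (nbr m t))) \<longleftrightarrow> (\<exists>w. adj G (vertex_of G d t) w \<and> P w)"
  using ex_nbr_iff_rotation[OF dart_of_in_darts[OF assms(1)], of t 60 P] assms(2) by simp

end

context triangle_free_rotation_system
begin

lemma holds_tetragram_cond_q:
  assumes d: "d \<in> darts G" and f: "facial G [v1, v2, v3, v4]" and "small G v1"
    and V: "vertex_of G d r1 = v1" "vertex_of G d r2 = v2" "vertex_of G d r3 = v3" "vertex_of G d r4 = v4"
  shows "holds G d (tetragram_cond_q r1 r2 r3 r4 x) \<longleftrightarrow> tetragram_cond G v1 v2 v3 v4 (vertex_of G d x)"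
proof (cases "small G (vertex_of G d x)")
  case False
  then show ?thesis using d unfolding tetragram_cond_q_def tetragram_cond_def by simp
next
  case True
  let ?x = "vertex_of G d x"
  let ?face_cond = "\<lambda>w. small G w \<or> facial G [v1, v2, w, ?x] \<or> facial G [v1, v4, w, ?x]"
  have face_cond: "holds G d (QOr (small_q (nbr m x))
       (QOr (facial_q [r1, r2, nbr m x, x]) (facial_q [r1, r4, nbr m x, x]))) \<longleftrightarrow>
     ?face_cond (vertex_of G d (nbr m x))" for m
    using holds_facial_q[OF d, of "[r1, r2, nbr m x, x]"] holds_facial_q[OF d, of "[r1, r4, nbr m x, x]"]
      d V \<open>small G v1\<close> by simp
  text \<open>Adjacency of a neighbour w of x to v3 is decided exactly: either v3 or w is small, or w
    lies on a 4-face with v2 or v4, and then triangle-freeness forbids w adjacent to v3.\<close>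
  have adj_v3: "holds G d (adj_either_q (nbr m x) r3) \<longleftrightarrow> adj G (vertex_of G d (nbr m x)) v3"
    if cond: "small G v3 \<or> (\<forall>w. adj G ?x w \<longrightarrow> ?face_cond w)" for m
  proof -
    let ?w = "vertex_of G d (nbr m x)"
    have "?face_cond ?w \<or> small G v3" using cond vertex_of_nbr_adj[OF d] by blast
    moreover have "\<not> adj G ?w v3" if "facial G [v1, v2, ?w, ?x] \<or> facial G [v1, v4, ?w, ?x]"
      using that facial4_adj facial4_adj[OF f] no_triangle adj_sym by metis
    ultimately show ?thesis
      using holds_adj_either_q[OF d, of "nbr m x" r3] holds_adj_either_q_imp_adj[OF d, of "nbr m x" r3] V(3)
      by auto
  qed
  have raw: "holds G d (tetragram_cond_q r1 r2 r3 r4 x) \<longleftrightarrow> ?x \<noteq> v2 \<and> ?x \<noteq> v4 \<and>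
      (small G v3 \<or> (\<forall>w. adj G ?x w \<longrightarrow> ?face_cond w)) \<and> \<not> adj G ?x v3 \<and>
      (\<forall>m<60. vertex_of G d (nbr m x) = v1 \<or> \<not> holds G d (adj_either_q (nbr m x) r3))"
    using face_cond all_nbr_terms_iff[OF d True, of ?face_cond] holds_adj_q[OF d True, of r3] d V True
    by (simp add: tetragram_cond_q_def)
  show ?thesis
  proof (cases "small G v3 \<or> (\<forall>w. adj G ?x w \<longrightarrow> ?face_cond w)")
    case True
    then have "(\<forall>m<60. vertex_of G d (nbr m x) = v1 \<or> \<not> holds G d (adj_either_q (nbr m x) r3)) \<longleftrightarrow>
        (\<forall>m<60. vertex_of G d (nbr m x) = v1 \<or> \<not> adj G (vertex_of G d (nbr m x)) v3)"
      using adj_v3 by simp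
    also have "\<dots> \<longleftrightarrow> (\<forall>b. adj G ?x b \<longrightarrow> b = v1 \<or> \<not> adj G b v3)"
      by (rule all_nbr_terms_iff[OF d \<open>small G ?x\<close>])
    finally show ?thesis using raw True \<open>small G ?x\<close> unfolding tetragram_cond_def by blast
  next
    case False
    then show ?thesis using raw unfolding tetragram_cond_def by blast
  qed
qed

lemma holds_tetragram_q:
  assumes d: "d \<in> darts G" and f: "facial G [v1, v2, v3, v4]" and dg: "deg G v1 = 3"
    and V: "vertex_of G d r1 = v1" "vertex_of G d r2 = v2" "vertex_of G d r3 = v3" "vertex_of G d r4 = v4"
  shows "holds G d (tetragram_q r1 r2 r3 r4) \<longleftrightarrow> secure_tetragram G v1 v2 v3 v4"
proof -
  have "small G v1" using dg unfolding small_def by simp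
  then show ?thesis
    unfolding tetragram_q_def secure_tetragram_iff[OF f dg] holds_q_ex
      holds_tetragram_cond_q[OF d f \<open>small G v1\<close> V]
    using ex_nbr_terms_iff[OF d, of r1] dg V(1) by simp
qed

end

section \<open>Octagrams, decagrams and hexagrams\<close>

definition octagram_q :: "dart_term \<Rightarrow> dart_term \<Rightarrow> dart_term \<Rightarrow> dart_term \<Rightarrow> query" where
  "octagram_q r1 r2 r3 r4 = q_conj [deg3_q r2, deg3_q r3, deg3_q r4]"

context rotation_system
begin

lemma holds_octagram_q:
  assumes d: "d \<in> darts G" and f: "facial G [v1, v2, v3, v4]" and dg: "deg G v1 = 3"
    and V: "vertex_of G d r2 = v2" "vertex_of G d r3 = v3" "vertex_of G d r4 = v4"
  shows "holds G d (octagram_q r1 r2 r3 r4) \<longleftrightarrow> secure_octagram G v1 v2 v3 v4"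
  using d f dg V unfolding octagram_q_def secure_octagram_def octagram_def tetragram_def small_def
  by auto

end

definition decagram_cond :: "('v, 'd) rotsys \<Rightarrow> 'v \<Rightarrow> 'v \<Rightarrow> 'v \<Rightarrow> 'v \<Rightarrow> 'v \<Rightarrow> 'v \<Rightarrow> 'v \<Rightarrow> bool" where
  "decagram_cond G v1 v2 v3 v4 v5 x1 x3 \<longleftrightarrow>
     x1 \<noteq> v5 \<and> x1 \<noteq> v2 \<and> x3 \<noteq> v2 \<and> x3 \<noteq> v4 \<and> x1 \<noteq> x3 \<and> small G x1 \<and> small G x3 \<and>
     \<not> adj G x1 x3 \<and> (\<forall>w. adj G x1 w \<longrightarrow> \<not> adj G x3 w)"

definition decagram_cond_q :: "dart_term \<Rightarrow> dart_term \<Rightarrow> dart_term \<Rightarrow> dart_term \<Rightarrow> dart_term \<Rightarrow>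
    dart_term \<Rightarrow> dart_term \<Rightarrow> query" where
  "decagram_cond_q r1 r2 r3 r4 r5 x1 x3 = q_conj [QNot (Same_vertex x1 r5), QNot (Same_vertex x1 r2),
     QNot (Same_vertex x3 r2), QNot (Same_vertex x3 r4), QNot (Same_vertex x1 x3), small_q x1, small_q x3,
     QNot (adj_q x1 x3), q_all 60 (\<lambda>m. QNot (adj_q x3 (nbr m x1)))]"

definition decagram_q :: "dart_term \<Rightarrow> dart_term \<Rightarrow> dart_term \<Rightarrow> dart_term \<Rightarrow> dart_term \<Rightarrow> query" where
  "decagram_q r1 r2 r3 r4 r5 = q_conj [deg3_q r2, deg3_q r3, deg3_q r4, deg3_q r5,
     q_ex 60 (\<lambda>k. q_ex 60 (\<lambda>l. decagram_cond_q r1 r2 r3 r4 r5 (nbr k r1) (nbr l r3)))]"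

context rotation_system
begin

lemma secure_decagram_iff:
  assumes "facial G [v1, v2, v3, v4, v5]" "deg G v1 = 3"
  shows "secure_decagram G v1 v2 v3 v4 v5 \<longleftrightarrow>
     deg G v2 = 3 \<and> deg G v3 = 3 \<and> deg G v4 = 3 \<and> deg G v5 = 3 \<and>
     (\<exists>x1. adj G v1 x1 \<and> (\<exists>x3. adj G v3 x3 \<and> decagram_cond G v1 v2 v3 v4 v5 x1 x3))"
  using assms unfolding secure_decagram_def decagram_def pentagram_def decagram_cond_def other_nb_def small_def
  by (auto; blast)

lemma holds_decagram_cond_q:
  assumes d: "d \<in> darts G"
    and V: "vertex_of G d r1 = v1" "vertex_of G d r2 = v2" "vertex_of G d r3 = v3"
      "vertex_of G d r4 = v4" "vertex_of G d r5 = v5"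
  shows "holds G d (decagram_cond_q r1 r2 r3 r4 r5 x1 x3) \<longleftrightarrow>
    decagram_cond G v1 v2 v3 v4 v5 (vertex_of G d x1) (vertex_of G d x3)"
proof (cases "small G (vertex_of G d x1) \<and> small G (vertex_of G d x3)")
  case False
  then show ?thesis using d unfolding decagram_cond_q_def decagram_cond_def by auto
next
  case True
  then show ?thesis
    unfolding decagram_cond_q_def decagram_cond_def
    using d V holds_adj_q[OF d, of x1 x3] holds_adj_q[OF d, of x3]
      all_nbr_terms_iff[OF d, of x1 "\<lambda>w. \<not> adj G (vertex_of G d x3) w"]
    by (simp add: adj_sym)
qed

lemma holds_decagram_q:
  assumes d: "d \<in> darts G" and f: "facial G [v1, v2, v3, v4, v5]" and dg: "deg G v1 = 3"
    and V: "vertex_of G d r1 = v1" "vertex_of G d r2 = v2" "vertex_of G d r3 = v3"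
      "vertex_of G d r4 = v4" "vertex_of G d r5 = v5"
  shows "holds G d (decagram_q r1 r2 r3 r4 r5) \<longleftrightarrow> secure_decagram G v1 v2 v3 v4 v5"
proof (cases "deg G v3 = 3")
  case False
  then show ?thesis using d V secure_decagram_iff[OF f dg] unfolding decagram_q_def by auto
next
  case True
  have "(\<exists>k<60. \<exists>l<60. decagram_cond G v1 v2 v3 v4 v5 (vertex_of G d (nbr k r1)) (vertex_of G d (nbr l r3)))
    \<longleftrightarrow> (\<exists>x1. adj G v1 x1 \<and> (\<exists>x3. adj G v3 x3 \<and> decagram_cond G v1 v2 v3 v4 v5 x1 x3))"
    using ex_nbr_terms_iff[OF d, of r1] ex_nbr_terms_iff[OF d, of r3] dg True V by simp
  then show ?thesis
    unfolding decagram_q_def secure_decagram_iff[OF f dg] using d V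
    by (simp add: holds_decagram_cond_q[OF d V])
qed

end

definition hexagram_safe :: "('v, 'd) rotsys \<Rightarrow> 'v \<Rightarrow> 'v \<Rightarrow> 'v \<Rightarrow> bool" where
  "hexagram_safe G v1 v2 v3 \<longleftrightarrow> (\<forall>a. adj G v1 a \<longrightarrow> (\<forall>b. adj G v3 b \<longrightarrow>
     (a = b \<longrightarrow> a = v2) \<and> (a \<noteq> v2 \<and> b \<noteq> v1 \<longrightarrow> \<not> adj G a b)))"

definition hexagram_cond :: "('v, 'd) rotsys \<Rightarrow> 'v \<Rightarrow> 'v \<Rightarrow> 'v \<Rightarrow> 'v \<Rightarrow> 'v \<Rightarrow> bool" where
  "hexagram_cond G v1 v2 v3 v6 x \<longleftrightarrow>
     x \<noteq> v2 \<and> x \<noteq> v6 \<and> small G x \<and> small G v3 \<and> small G v6 \<and> hexagram_safe G v1 v2 v3"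

definition hexagram_cond_q :: "dart_term \<Rightarrow> dart_term \<Rightarrow> dart_term \<Rightarrow> dart_term \<Rightarrow> dart_term \<Rightarrow> query" where
  "hexagram_cond_q r1 r2 r3 r6 x = q_conj [QNot (Same_vertex x r2), QNot (Same_vertex x r6),
     small_q x, small_q r3, small_q r6,
     q_all 60 (\<lambda>i. q_all 60 (\<lambda>m.
       QAnd (q_imp (Same_vertex (nbr i r1) (nbr m r3)) (Same_vertex (nbr i r1) r2))
         (q_imp (QAnd (QNot (Same_vertex (nbr i r1) r2)) (QNot (Same_vertex (nbr m r3) r1)))
           (QNot (adj_q (nbr i r1) (nbr m r3))))))]"

definition hexagram_q :: "dart_term \<Rightarrow> dart_term \<Rightarrow> dart_term \<Rightarrow> dart_term \<Rightarrow> query" where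
  "hexagram_q r1 r2 r3 r6 = q_ex 60 (\<lambda>k. hexagram_cond_q r1 r2 r3 r6 (nbr k r1))"

context triangle_free_rotation_system
begin

lemma hexagram_safety_iff:
  assumes a: "adj G v1 v2" "adj G v2 v3" and "v1 \<noteq> v3"
  shows "(\<forall>ps. gpath G ps \<and> hd ps = v1 \<and> last ps = v3 \<and> length ps \<le> 4 \<longrightarrow> ps = [v1, v2, v3]) \<longleftrightarrow>
    hexagram_safe G v1 v2 v3"
proof -
  have n13: "\<not> adj G v1 v3" using no_triangle a adj_sym by blast
  have paths3: "(\<forall>c. gpath G [v1, c, v3] \<longrightarrow> [v1, c, v3] = [v1, v2, v3]) \<longleftrightarrow>
      (\<forall>c. adj G v1 c \<longrightarrow> adj G v3 c \<longrightarrow> c = v2)"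
    using n13 adj_in_verts adj_neq adj_sym assms(3) by (auto; metis)
  have paths4: "(\<forall>b c. gpath G [v1, b, c, v3] \<longrightarrow> [v1, b, c, v3] = [v1, v2, v3]) \<longleftrightarrow>
      (\<forall>b c. adj G v1 b \<longrightarrow> adj G v3 c \<longrightarrow> b \<noteq> v2 \<and> c \<noteq> v1 \<longrightarrow> \<not> adj G b c)"
  proof
    assume H: "\<forall>b c. gpath G [v1, b, c, v3] \<longrightarrow> [v1, b, c, v3] = [v1, v2, v3]"
    show "\<forall>b c. adj G v1 b \<longrightarrow> adj G v3 c \<longrightarrow> b \<noteq> v2 \<and> c \<noteq> v1 \<longrightarrow> \<not> adj G b c"
    proof (intro allI impI notI)
      fix b c assume bc: "adj G v1 b" "adj G v3 c" "b \<noteq> v2 \<and> c \<noteq> v1" "adj G b c"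
      then have "b \<noteq> v3" using n13 by blast
      with bc have "gpath G [v1, b, c, v3]" using adj_in_verts adj_neq adj_sym assms(3) by auto
      then show False using H by auto
    qed
  next
    assume K: "\<forall>b c. adj G v1 b \<longrightarrow> adj G v3 c \<longrightarrow> b \<noteq> v2 \<and> c \<noteq> v1 \<longrightarrow> \<not> adj G b c"
    have "\<not> gpath G [v1, b, c, v3]" for b c
    proof
      assume "gpath G [v1, b, c, v3]"
      then have "adj G v1 b" "adj G b c" "adj G v3 c" "c \<noteq> v1" using adj_sym by auto
      moreover have "b \<noteq> v2" using calculation no_triangle a(2) adj_sym by metis
      ultimately show False using K by blast
    qed
    then show "\<forall>b c. gpath G [v1, b, c, v3] \<longrightarrow> [v1, b, c, v3] = [v1, v2, v3]" by blast
  qed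
  show ?thesis
    unfolding all_short_paths_iff paths3 paths4 hexagram_safe_def using assms(3) n13 by auto
qed

lemma secure_hexagram_iff:
  assumes f: "facial G [v1, v2, v3, v4, v5, v6]" and dg: "deg G v1 = 3"
  shows "secure_hexagram G v1 v2 v3 v4 v5 v6 \<longleftrightarrow> (\<exists>x. adj G v1 x \<and> hexagram_cond G v1 v2 v3 v6 x)"
proof -
  have "adj G v1 v2" "adj G v2 v3" "v1 \<noteq> v3" using facial6_adj[OF f] f unfolding facial_def by auto
  from hexagram_safety_iff[OF this] show ?thesis
    unfolding secure_hexagram_def hexagram_def hexagram_cond_def other_nb_def small_def
    using f dg by auto
qed

lemma holds_hexagram_cond_q:
  assumes d: "d \<in> darts G" and f: "facial G [v1, v2, v3, v4, v5, v6]" and dg: "deg G v1 = 3"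
    and V: "vertex_of G d r1 = v1" "vertex_of G d r2 = v2" "vertex_of G d r3 = v3" "vertex_of G d r6 = v6"
    and x: "adj G v1 (vertex_of G d x)"
  shows "holds G d (hexagram_cond_q r1 r2 r3 r6 x) \<longleftrightarrow> hexagram_cond G v1 v2 v3 v6 (vertex_of G d x)"
proof (cases "vertex_of G d x \<noteq> v2 \<and> vertex_of G d x \<noteq> v6 \<and> small G (vertex_of G d x) \<and>
    small G v3 \<and> small G v6")
  case False
  then show ?thesis using d V unfolding hexagram_cond_q_def hexagram_cond_def by auto
next
  case True
  have "adj G v1 v2" "adj G v1 v6" "distinct [v1, v2, v3, v4, v5, v6]"
    using facial6_adj[OF f] adj_sym f unfolding facial_def by blast+
  then have nbrs_v1: "a = v2 \<or> a = v6 \<or> a = vertex_of G d x" if "adj G v1 a" for a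
    using nbrs_of_deg3[OF dg _ _ x _ that] True by auto
  let ?Q = "\<lambda>a b. (a = b \<longrightarrow> a = v2) \<and> (a \<noteq> v2 \<and> b \<noteq> v1 \<longrightarrow> \<not> adj G a b)"
  text \<open>Every neighbour of v1 other than v2 is v6 or x, hence small, so the adjacency tests are exact.\<close>
  have exact: "holds G d (q_imp (QAnd (QNot (Same_vertex (nbr i r1) r2)) (QNot (Same_vertex (nbr m r3) r1)))
      (QNot (adj_q (nbr i r1) (nbr m r3)))) \<longleftrightarrow>
    (vertex_of G d (nbr i r1) \<noteq> v2 \<and> vertex_of G d (nbr m r3) \<noteq> v1 \<longrightarrow>
      \<not> adj G (vertex_of G d (nbr i r1)) (vertex_of G d (nbr m r3)))" for i m
    using holds_adj_q[OF d] nbrs_v1[OF vertex_of_nbr_adj[OF d, of r1 i, unfolded V(1)]] True V by auto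
  have "small G v1" using dg unfolding small_def by simp
  have "holds G d (q_all 60 (\<lambda>i. q_all 60 (\<lambda>m.
       QAnd (q_imp (Same_vertex (nbr i r1) (nbr m r3)) (Same_vertex (nbr i r1) r2))
         (q_imp (QAnd (QNot (Same_vertex (nbr i r1) r2)) (QNot (Same_vertex (nbr m r3) r1)))
           (QNot (adj_q (nbr i r1) (nbr m r3))))))) \<longleftrightarrow>
    (\<forall>i<60. \<forall>m<60. ?Q (vertex_of G d (nbr i r1)) (vertex_of G d (nbr m r3)))"
    using exact V by (simp del: dart_of_nbr)
  also have "\<dots> \<longleftrightarrow> (\<forall>i<60. \<forall>b. adj G v3 b \<longrightarrow> ?Q (vertex_of G d (nbr i r1)) b)"
  proof -
    have "(\<forall>m<60. ?Q a (vertex_of G d (nbr m r3))) \<longleftrightarrow> (\<forall>b. adj G v3 b \<longrightarrow> ?Q a b)" for a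
      using all_nbr_terms_iff[OF d, of r3 "?Q a"] True V(3) by simp
    then show ?thesis by blast
  qed
  also have "\<dots> \<longleftrightarrow> hexagram_safe G v1 v2 v3"
    unfolding hexagram_safe_def
    using all_nbr_terms_iff[OF d, of r1 "\<lambda>a. \<forall>b. adj G v3 b \<longrightarrow> ?Q a b"] \<open>small G v1\<close> V(1)
    by (simp del: dart_of_nbr)
  finally show ?thesis
    using d True V unfolding hexagram_cond_q_def hexagram_cond_def by (simp del: dart_of_nbr)
qed

lemma holds_hexagram_q:
  assumes d: "d \<in> darts G" and f: "facial G [v1, v2, v3, v4, v5, v6]" and dg: "deg G v1 = 3"
    and V: "vertex_of G d r1 = v1" "vertex_of G d r2 = v2" "vertex_of G d r3 = v3" "vertex_of G d r6 = v6"
  shows "holds G d (hexagram_q r1 r2 r3 r6) \<longleftrightarrow> secure_hexagram G v1 v2 v3 v4 v5 v6"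
proof -
  have "(\<exists>k<60. holds G d (hexagram_cond_q r1 r2 r3 r6 (nbr k r1))) \<longleftrightarrow>
      (\<exists>k<60. hexagram_cond G v1 v2 v3 v6 (vertex_of G d (nbr k r1)))"
    using holds_hexagram_cond_q[OF d f dg V vertex_of_nbr_adj[OF d, of r1, unfolded V(1)]] by simp
  also have "\<dots> \<longleftrightarrow> (\<exists>x. adj G v1 x \<and> hexagram_cond G v1 v2 v3 v6 x)"
    using ex_nbr_terms_iff[OF d, of r1] dg V(1) by simp
  finally show ?thesis unfolding hexagram_q_def secure_hexagram_iff[OF f dg] by simp
qed

end

section \<open>Pentagrams\<close>

definition no_2path_outside :: "('v, 'd) rotsys \<Rightarrow> 'v \<Rightarrow> 'v \<Rightarrow> 'v set \<Rightarrow> bool" where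
  "no_2path_outside G u w Vs \<longleftrightarrow> (\<forall>a. adj G u a \<longrightarrow> a \<notin> Vs \<longrightarrow> \<not> adj G a w)"

definition no_3path_outside :: "('v, 'd) rotsys \<Rightarrow> 'v \<Rightarrow> 'v \<Rightarrow> 'v set \<Rightarrow> bool" where
  "no_3path_outside G u w Vs \<longleftrightarrow>
     (\<forall>a b. adj G u a \<longrightarrow> adj G b w \<longrightarrow> a \<notin> Vs \<longrightarrow> b \<notin> Vs \<longrightarrow> a \<noteq> w \<longrightarrow> b \<noteq> u \<longrightarrow> \<not> adj G a b)"

context simple_rotation_system
begin

lemma gpath_avoiding_3:
  assumes "u \<notin> Vs" "w \<notin> Vs" "u \<noteq> w"
  shows "gpath G [u, a, w] \<and> set [u, a, w] \<inter> Vs = {} \<longleftrightarrow>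
    adj G u a \<and> adj G a w \<and> a \<notin> Vs \<and> u \<in> verts G \<and> w \<in> verts G"
  using assms adj_neq adj_in_verts by auto

lemma gpath_avoiding_4:
  assumes "u \<notin> Vs" "w \<notin> Vs" "u \<noteq> w"
  shows "gpath G [u, a, b, w] \<and> set [u, a, b, w] \<inter> Vs = {} \<longleftrightarrow>
    adj G u a \<and> adj G a b \<and> adj G b w \<and> a \<notin> Vs \<and> b \<notin> Vs \<and> a \<noteq> w \<and> b \<noteq> u \<and>
    u \<in> verts G \<and> w \<in> verts G"
  using assms adj_neq adj_in_verts by auto

lemma no_short_path_avoiding_iff:
  assumes u: "u \<in> verts G" "u \<notin> Vs" and w: "w \<in> verts G" "w \<notin> Vs"
  shows "\<not> (\<exists>ps. gpath G ps \<and> set ps \<inter> Vs = {} \<and> hd ps = u \<and> last ps = w \<and> length ps \<le> 4) \<longleftrightarrow>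
    u \<noteq> w \<and> \<not> adj G u w \<and> no_2path_outside G u w Vs \<and> no_3path_outside G u w Vs"
  (is "\<not> (\<exists>ps. ?P ps) \<longleftrightarrow> ?R")
proof
  assume N: "\<not> (\<exists>ps. ?P ps)"
  have "u \<noteq> w" using N[unfolded not_ex, rule_format, of "[u]"] u by auto
  moreover have "\<not> adj G u w" using N[unfolded not_ex, rule_format, of "[u, w]"] u w calculation by auto
  moreover have "no_2path_outside G u w Vs" unfolding no_2path_outside_def
  proof (intro allI impI notI)
    fix a assume "adj G u a" "a \<notin> Vs" "adj G a w"
    then have "gpath G [u, a, w] \<and> set [u, a, w] \<inter> Vs = {}"
      using gpath_avoiding_3[OF u(2) w(2) \<open>u \<noteq> w\<close>] u w by blast
    then show False using N[unfolded not_ex, rule_format, of "[u, a, w]"] by simp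
  qed
  moreover have "no_3path_outside G u w Vs" unfolding no_3path_outside_def
  proof (intro allI impI notI)
    fix a b assume "adj G u a" "adj G b w" "a \<notin> Vs" "b \<notin> Vs" "a \<noteq> w" "b \<noteq> u" "adj G a b"
    moreover have "adj G a b \<Longrightarrow> adj G b w \<Longrightarrow> gpath G [u, a, b, w] \<and> set [u, a, b, w] \<inter> Vs = {}"
      using gpath_avoiding_4[OF u(2) w(2) \<open>u \<noteq> w\<close>] u w calculation by blast
    ultimately show False using N[unfolded not_ex, rule_format, of "[u, a, b, w]"] by simp
  qed
  ultimately show ?R by blast
next
  assume R: ?R
  then have uw: "u \<noteq> w" by blast
  have "(u = w \<and> u \<in> verts G \<longrightarrow> \<not> (gpath G [u] \<and> set [u] \<inter> Vs = {})) \<and>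
      (gpath G [u, w] \<longrightarrow> \<not> (gpath G [u, w] \<and> set [u, w] \<inter> Vs = {})) \<and>
      (\<forall>a. gpath G [u, a, w] \<longrightarrow> \<not> (gpath G [u, a, w] \<and> set [u, a, w] \<inter> Vs = {})) \<and>
      (\<forall>a b. gpath G [u, a, b, w] \<longrightarrow> \<not> (gpath G [u, a, b, w] \<and> set [u, a, b, w] \<inter> Vs = {}))"
    unfolding gpath_avoiding_3[OF u(2) w(2) uw] gpath_avoiding_4[OF u(2) w(2) uw]
    using R unfolding no_2path_outside_def no_3path_outside_def by auto
  then have "\<forall>ps. gpath G ps \<and> hd ps = u \<and> last ps = w \<and> length ps \<le> 4 \<longrightarrow>
      \<not> (gpath G ps \<and> set ps \<inter> Vs = {})"
    by (simp only: all_short_paths_iff)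
  then show "\<not> (\<exists>ps. ?P ps)" by blast
qed

lemma short_paths_avoiding_facial_iff:
  assumes u: "u \<in> verts G" "u \<notin> Vs" and w: "w \<in> verts G" "w \<notin> Vs" and uw: "u \<noteq> w" "\<not> adj G u w"
  shows "(\<forall>ps. gpath G ps \<and> set ps \<inter> Vs = {} \<and> hd ps = u \<and> last ps = w \<and> length ps \<le> 4 \<longrightarrow>
            length ps = 3 \<and> facial G [u, A, B, w, ps ! 1]) \<longleftrightarrow>
    (\<forall>a. adj G u a \<longrightarrow> a \<notin> Vs \<longrightarrow> adj G a w \<longrightarrow> facial G [u, A, B, w, a]) \<and> no_3path_outside G u w Vs"
  (is "?L \<longleftrightarrow> ?F \<and> ?N")
proof
  assume L: ?L
  have "facial G [u, A, B, w, a]" if "adj G u a" "a \<notin> Vs" "adj G a w" for a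
  proof -
    have "gpath G [u, a, w] \<and> set [u, a, w] \<inter> Vs = {}"
      using gpath_avoiding_3[OF u(2) w(2) uw(1)] that u w by blast
    then show ?thesis using L[rule_format, of "[u, a, w]"] by simp
  qed
  moreover have ?N unfolding no_3path_outside_def
  proof (intro allI impI notI)
    fix a b assume "adj G u a" "adj G b w" "a \<notin> Vs" "b \<notin> Vs" "a \<noteq> w" "b \<noteq> u" "adj G a b"
    then have "gpath G [u, a, b, w] \<and> set [u, a, b, w] \<inter> Vs = {}"
      using gpath_avoiding_4[OF u(2) w(2) uw(1)] u w by blast
    then show False using L[rule_format, of "[u, a, b, w]"] by simp
  qed
  ultimately show "?F \<and> ?N" by blast
next
  assume FN: "?F \<and> ?N"
  have "length ps = 3 \<and> facial G [u, A, B, w, ps ! 1]"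
    if "gpath G ps \<and> hd ps = u \<and> last ps = w \<and> length ps \<le> 4" "gpath G ps \<and> set ps \<inter> Vs = {}" for ps
  proof -
    have "(u = w \<and> u \<in> verts G \<longrightarrow> False) \<and> (gpath G [u, w] \<longrightarrow> False) \<and>
        (\<forall>a. gpath G [u, a, w] \<longrightarrow> gpath G [u, a, w] \<and> set [u, a, w] \<inter> Vs = {} \<longrightarrow>
           length [u, a, w] = 3 \<and> facial G [u, A, B, w, [u, a, w] ! 1]) \<and>
        (\<forall>a b. gpath G [u, a, b, w] \<longrightarrow> gpath G [u, a, b, w] \<and> set [u, a, b, w] \<inter> Vs = {} \<longrightarrow> False)"
    proof (intro conjI allI impI)
      show "u = w \<and> u \<in> verts G \<Longrightarrow> False" using uw by blast
      show "gpath G [u, w] \<Longrightarrow> False" using uw by simp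
      fix a assume "gpath G [u, a, w]" "gpath G [u, a, w] \<and> set [u, a, w] \<inter> Vs = {}"
      then have "adj G u a" "adj G a w" "a \<notin> Vs"
        using gpath_avoiding_3[OF u(2) w(2) uw(1)] by blast+
      then show "facial G [u, A, B, w, [u, a, w] ! 1]" using FN by simp
    next
      show "length [u, a, w] = 3" for a by simp
    next
      fix a b assume "gpath G [u, a, b, w]" "gpath G [u, a, b, w] \<and> set [u, a, b, w] \<inter> Vs = {}"
      then show False using FN gpath_avoiding_4[OF u(2) w(2) uw(1)] unfolding no_3path_outside_def by blast
    qed
    then have "\<forall>ps. gpath G ps \<and> hd ps = u \<and> last ps = w \<and> length ps \<le> 4 \<longrightarrow>
        gpath G ps \<and> set ps \<inter> Vs = {} \<longrightarrow> length ps = 3 \<and> facial G [u, A, B, w, ps ! 1]"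
      by (simp only: all_short_paths_iff) blast
    then show ?thesis using that by blast
  qed
  then show ?L by blast
qed

end

definition pentagram_cond :: "('v, 'd) rotsys \<Rightarrow> 'v \<Rightarrow> 'v \<Rightarrow> 'v \<Rightarrow> 'v \<Rightarrow> 'v \<Rightarrow>
    'v \<Rightarrow> 'v \<Rightarrow> 'v \<Rightarrow> 'v \<Rightarrow> bool" where
  "pentagram_cond G v1 v2 v3 v4 v5 x1 x2 x3 x4 \<longleftrightarrow>
     distinct [x1, x2, x3, x4] \<and> small G v5 \<and> small G x1 \<and> small G x2 \<and> small G x3 \<and> small G x4 \<and>
     \<not> adj G x1 x2 \<and> \<not> adj G x1 x3 \<and> \<not> adj G x1 x4 \<and> \<not> adj G x2 x3 \<and> \<not> adj G x2 x4 \<and> \<not> adj G x3 x4 \<and>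
     (no_big_nb G v5 \<or> no_big_nb G x2) \<and> (no_big_nb G x3 \<or> no_big_nb G x4) \<and>
     x2 \<noteq> v5 \<and> \<not> adj G x2 v5 \<and>
     no_2path_outside G x2 v5 {v1, v2, v3, v4} \<and> no_3path_outside G x2 v5 {v1, v2, v3, v4} \<and>
     (\<forall>a. adj G x3 a \<longrightarrow> a \<notin> {v1, v2, v3, v4} \<longrightarrow> adj G a x4 \<longrightarrow> facial G [x3, v3, v4, x4, a]) \<and>
     no_3path_outside G x3 x4 {v1, v2, v3, v4}"

context triangle_free_rotation_system
begin

lemma pairwise_not_adj4:
  "(\<forall>a\<in>{x1, x2, x3, x4}. \<forall>b\<in>{x1, x2, x3, x4}. \<not> adj G a b) \<longleftrightarrow>
    \<not> adj G x1 x2 \<and> \<not> adj G x1 x3 \<and> \<not> adj G x1 x4 \<and> \<not> adj G x2 x3 \<and> \<not> adj G x2 x4 \<and> \<not> adj G x3 x4"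
  by (simp; metis adj_sym not_adj_self)

lemma pentagram_outer_nbrs:
  assumes f: "facial G [v1, v2, v3, v4, v5]"
    and x: "other_nb G v2 v1 v3 x2" "other_nb G v3 v2 v4 x3" "other_nb G v4 v3 v5 x4"
  shows "x2 \<notin> {v1, v2, v3, v4}" "x3 \<notin> {v1, v2, v3, v4}" "x4 \<notin> {v1, v2, v3, v4}" "v5 \<notin> {v1, v2, v3, v4}"
proof -
  have a: "adj G v1 v2" "adj G v2 v3" "adj G v3 v4" "adj G v4 v5" "adj G v5 v1"
    using facial5_adj[OF f] by auto
  have x': "adj G v2 x2" "adj G v3 x3" "adj G v4 x4" using x unfolding other_nb_def by blast+
  have "x2 \<noteq> v4" using no_triangle[OF x'(1)] a(2,3) adj_sym by blast
  then show "x2 \<notin> {v1, v2, v3, v4}" using x(1) adj_neq[OF x'(1)] unfolding other_nb_def by auto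
  have "x3 \<noteq> v1" using no_triangle[OF a(1,2)] x'(2) adj_sym by blast
  then show "x3 \<notin> {v1, v2, v3, v4}" using x(2) adj_neq[OF x'(2)] unfolding other_nb_def by auto
  have "x4 \<noteq> v1" using no_triangle[OF a(4,5)] x'(3) adj_sym by blast
  moreover have "x4 \<noteq> v2" using no_triangle[OF a(2,3)] x'(3) adj_sym by blast
  ultimately show "x4 \<notin> {v1, v2, v3, v4}" using x(3) adj_neq[OF x'(3)] unfolding other_nb_def by auto
  show "v5 \<notin> {v1, v2, v3, v4}" using f unfolding facial_def by auto
qed

lemma pentagram_core_iff:
  assumes f: "facial G [v1, v2, v3, v4, v5]"
    and x: "other_nb G v2 v1 v3 x2" "other_nb G v3 v2 v4 x3" "other_nb G v4 v3 v5 x4"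
    and sm: "small G v1 \<and> small G v2 \<and> small G v3 \<and> small G v4"
  shows "distinct [x1, x2, x3, x4] \<and>
        (\<forall>a\<in>{x1, x2, x3, x4}. \<forall>b\<in>{x1, x2, x3, x4}. \<not> adj G a b) \<and>
        \<not> (\<exists>ps. gpath G ps \<and> set ps \<inter> {v1, v2, v3, v4} = {} \<and>
               hd ps = x2 \<and> last ps = v5 \<and> length ps \<le> 4) \<and>
        (\<forall>ps. gpath G ps \<and> set ps \<inter> {v1, v2, v3, v4} = {} \<and>
               hd ps = x3 \<and> last ps = x4 \<and> length ps \<le> 4 \<longrightarrow>
               length ps = 3 \<and> facial G [x3, v3, v4, x4, ps ! 1]) \<and>
        small G v1 \<and> small G v2 \<and> small G v3 \<and> small G v4 \<and> small G v5 \<and> small G x1 \<and> small G x2 \<and> small G x3 \<and> small G x4 \<and>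
        (no_big_nb G v5 \<or> no_big_nb G x2) \<and> (no_big_nb G x3 \<or> no_big_nb G x4)
    \<longleftrightarrow> pentagram_cond G v1 v2 v3 v4 v5 x1 x2 x3 x4"
proof (cases "distinct [x1, x2, x3, x4] \<and> \<not> adj G x3 x4")
  case False
  then show ?thesis unfolding pentagram_cond_def by auto
next
  case True
  have out: "x2 \<notin> {v1, v2, v3, v4}" "x3 \<notin> {v1, v2, v3, v4}" "x4 \<notin> {v1, v2, v3, v4}"
    "v5 \<notin> {v1, v2, v3, v4}"
    using pentagram_outer_nbrs[OF f x] by blast+
  have verts: "x2 \<in> verts G" "x3 \<in> verts G" "x4 \<in> verts G" "v5 \<in> verts G"
    using x facial5_adj[OF f] adj_in_verts unfolding other_nb_def by blast+
  have "x3 \<noteq> x4" "\<not> adj G x3 x4" using True by simp_all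
  show ?thesis
    unfolding pentagram_cond_def pairwise_not_adj4
      no_short_path_avoiding_iff[OF verts(1) out(1) verts(4) out(4)]
      short_paths_avoiding_facial_iff[OF verts(2) out(2) verts(3) out(3) \<open>x3 \<noteq> x4\<close> \<open>\<not> adj G x3 x4\<close>]
    using True sm by blast
qed

lemma secure_pentagram_iff:
  assumes f: "facial G [v1, v2, v3, v4, v5]" and dg: "deg G v1 = 3"
  shows "secure_pentagram G v1 v2 v3 v4 v5 \<longleftrightarrow> deg G v2 = 3 \<and> deg G v3 = 3 \<and> deg G v4 = 3 \<and>
     (\<exists>x1 x2 x3 x4. other_nb G v1 v5 v2 x1 \<and> other_nb G v2 v1 v3 x2 \<and>
        other_nb G v3 v2 v4 x3 \<and> other_nb G v4 v3 v5 x4 \<and> pentagram_cond G v1 v2 v3 v4 v5 x1 x2 x3 x4)"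
proof (cases "deg G v2 = 3 \<and> deg G v3 = 3 \<and> deg G v4 = 3")
  case False
  then show ?thesis unfolding secure_pentagram_def pentagram_def by blast
next
  case True
  then have sm: "small G v1 \<and> small G v2 \<and> small G v3 \<and> small G v4" using dg unfolding small_def by simp
  have body: "other_nb G v1 v5 v2 x1 \<and> other_nb G v2 v1 v3 x2 \<and>
        other_nb G v3 v2 v4 x3 \<and> other_nb G v4 v3 v5 x4 \<and>
        distinct [x1, x2, x3, x4] \<and>
        (\<forall>a\<in>{x1, x2, x3, x4}. \<forall>b\<in>{x1, x2, x3, x4}. \<not> adj G a b) \<and>
        \<not> (\<exists>ps. gpath G ps \<and> set ps \<inter> {v1, v2, v3, v4} = {} \<and>
               hd ps = x2 \<and> last ps = v5 \<and> length ps \<le> 4) \<and>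
        (\<forall>ps. gpath G ps \<and> set ps \<inter> {v1, v2, v3, v4} = {} \<and>
               hd ps = x3 \<and> last ps = x4 \<and> length ps \<le> 4 \<longrightarrow>
               length ps = 3 \<and> facial G [x3, v3, v4, x4, ps ! 1]) \<and>
        small G v1 \<and> small G v2 \<and> small G v3 \<and> small G v4 \<and> small G v5 \<and>
        small G x1 \<and> small G x2 \<and> small G x3 \<and> small G x4 \<and>
        (no_big_nb G v5 \<or> no_big_nb G x2) \<and>
        (no_big_nb G x3 \<or> no_big_nb G x4) \<longleftrightarrow>
      other_nb G v1 v5 v2 x1 \<and> other_nb G v2 v1 v3 x2 \<and>
        other_nb G v3 v2 v4 x3 \<and> other_nb G v4 v3 v5 x4 \<and>
        pentagram_cond G v1 v2 v3 v4 v5 x1 x2 x3 x4" for x1 x2 x3 x4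
    by (intro conj_cong[OF refl], rule pentagram_core_iff[OF f _ _ _ sm]; assumption)
  show ?thesis
    unfolding secure_pentagram_def pentagram_def body using f dg True by blast
qed

end

definition outside_q :: "dart_term \<Rightarrow> dart_term list \<Rightarrow> query" where
  "outside_q t rs = q_conj (map (\<lambda>r. QNot (Same_vertex t r)) rs)"

definition no_2path_q :: "dart_term \<Rightarrow> dart_term \<Rightarrow> dart_term list \<Rightarrow> query" where
  "no_2path_q u w rs = q_all 60 (\<lambda>m. q_imp (outside_q (nbr m u) rs) (QNot (adj_either_q (nbr m u) w)))"

definition no_3path_q :: "dart_term \<Rightarrow> dart_term \<Rightarrow> dart_term list \<Rightarrow> query" where
  "no_3path_q u w rs = q_all 60 (\<lambda>m. q_all 60 (\<lambda>n. q_imp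
     (q_conj [outside_q (nbr m u) rs, outside_q (nbr n w) rs,
        QNot (Same_vertex (nbr m u) w), QNot (Same_vertex (nbr n w) u)])
     (QNot (adj_either_q (nbr m u) (nbr n w)))))"

definition facial_2paths_q :: "dart_term \<Rightarrow> dart_term \<Rightarrow> dart_term \<Rightarrow> dart_term \<Rightarrow> dart_term list \<Rightarrow> query" where
  "facial_2paths_q u a b w rs = q_all 60 (\<lambda>m.
     q_imp (QAnd (outside_q (nbr m u) rs) (adj_either_q (nbr m u) w)) (facial_q [u, a, b, w, nbr m u]))"

lemma holds_outside_q [simp]:
  "holds G d (outside_q t rs) \<longleftrightarrow> vertex_of G d t \<notin> set (map (vertex_of G d) rs)"
  by (auto simp: outside_q_def)

context rotation_system
begin

lemma holds_no_2path_q: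
  assumes d: "d \<in> darts G" and "small G (vertex_of G d u)" "small G (vertex_of G d w)"
  shows "holds G d (no_2path_q u w rs) \<longleftrightarrow>
    no_2path_outside G (vertex_of G d u) (vertex_of G d w) (set (map (vertex_of G d) rs))"
proof -
  let ?Vs = "set (map (vertex_of G d) rs)"
  have "holds G d (no_2path_q u w rs) \<longleftrightarrow>
      (\<forall>m<60. vertex_of G d (nbr m u) \<notin> ?Vs \<longrightarrow> \<not> adj G (vertex_of G d (nbr m u)) (vertex_of G d w))"
    unfolding no_2path_q_def using holds_adj_either_q[OF d] assms(3) by (simp del: dart_of_nbr)
  also have "\<dots> \<longleftrightarrow> no_2path_outside G (vertex_of G d u) (vertex_of G d w) ?Vs"
    unfolding no_2path_outside_def
    by (rule all_nbr_terms_iff[OF d assms(2), of "\<lambda>a. a \<notin> ?Vs \<longrightarrow> \<not> adj G a (vertex_of G d w)"])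
  finally show ?thesis .
qed

lemma holds_facial_2paths_q:
  assumes d: "d \<in> darts G" and "small G (vertex_of G d u)" "small G (vertex_of G d w)"
  shows "holds G d (facial_2paths_q u a b w rs) \<longleftrightarrow>
    (\<forall>c. adj G (vertex_of G d u) c \<longrightarrow> c \<notin> set (map (vertex_of G d) rs) \<longrightarrow> adj G c (vertex_of G d w) \<longrightarrow>
       facial G [vertex_of G d u, vertex_of G d a, vertex_of G d b, vertex_of G d w, c])"
proof -
  let ?Vs = "set (map (vertex_of G d) rs)"
  let ?F = "\<lambda>c. c \<notin> ?Vs \<longrightarrow> adj G c (vertex_of G d w) \<longrightarrow>
       facial G [vertex_of G d u, vertex_of G d a, vertex_of G d b, vertex_of G d w, c]"
  have "holds G d (facial_2paths_q u a b w rs) \<longleftrightarrow> (\<forall>m<60. ?F (vertex_of G d (nbr m u)))"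
    unfolding facial_2paths_q_def
    using holds_adj_either_q[OF d] holds_facial_q[OF d, of "[u, a, b, w, nbr _ u]"] assms(2,3)
    by (simp del: dart_of_nbr) blast
  also have "\<dots> \<longleftrightarrow> (\<forall>c. adj G (vertex_of G d u) c \<longrightarrow> ?F c)"
    by (rule all_nbr_terms_iff[OF d assms(2)])
  finally show ?thesis .
qed

end

context simple_rotation_system
begin

lemma holds_no_3path_q:
  assumes d: "d \<in> darts G" and su: "small G (vertex_of G d u)" and sw: "small G (vertex_of G d w)"
    and nb: "no_big_nb G (vertex_of G d u) \<or> no_big_nb G (vertex_of G d w)"
  shows "holds G d (no_3path_q u w rs) \<longleftrightarrow>
    no_3path_outside G (vertex_of G d u) (vertex_of G d w) (set (map (vertex_of G d) rs))"
proof -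
  let ?Vs = "set (map (vertex_of G d) rs)"
  let ?U = "vertex_of G d u" and ?W = "vertex_of G d w"
  let ?\<Phi> = "\<lambda>a b. a \<notin> ?Vs \<and> b \<notin> ?Vs \<and> a \<noteq> ?W \<and> b \<noteq> ?U \<longrightarrow> \<not> adj G a b"
  text \<open>A neighbour of the endpoint without big neighbours is small, so each adjacency test is exact.\<close>
  have "holds G d (adj_either_q (nbr m u) (nbr n w)) \<longleftrightarrow>
      adj G (vertex_of G d (nbr m u)) (vertex_of G d (nbr n w))" for m n
    using nb vertex_of_nbr_adj[OF d, of u m] vertex_of_nbr_adj[OF d, of w n]
    by (intro holds_adj_either_q[OF d]) (auto simp: no_big_nb_def big_def small_def simp del: dart_of_nbr)
  then have "holds G d (no_3path_q u w rs) \<longleftrightarrow>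
      (\<forall>m<60. \<forall>n<60. ?\<Phi> (vertex_of G d (nbr m u)) (vertex_of G d (nbr n w)))"
    unfolding no_3path_q_def by (simp del: dart_of_nbr)
  also have "\<dots> \<longleftrightarrow> (\<forall>m<60. \<forall>b. adj G ?W b \<longrightarrow> ?\<Phi> (vertex_of G d (nbr m u)) b)"
  proof -
    have "(\<forall>n<60. ?\<Phi> a (vertex_of G d (nbr n w))) \<longleftrightarrow> (\<forall>b. adj G ?W b \<longrightarrow> ?\<Phi> a b)" for a
      by (rule all_nbr_terms_iff[OF d sw])
    then show ?thesis by blast
  qed
  also have "\<dots> \<longleftrightarrow> (\<forall>a. adj G ?U a \<longrightarrow> (\<forall>b. adj G ?W b \<longrightarrow> ?\<Phi> a b))"
    by (rule all_nbr_terms_iff[OF d su, of "\<lambda>a. \<forall>b. adj G ?W b \<longrightarrow> ?\<Phi> a b"])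
  also have "\<dots> \<longleftrightarrow> no_3path_outside G ?U ?W ?Vs"
    unfolding no_3path_outside_def using adj_sym by blast
  finally show ?thesis .
qed

end

definition pentagram_cond_q :: "dart_term \<Rightarrow> dart_term \<Rightarrow> dart_term \<Rightarrow> dart_term \<Rightarrow> dart_term \<Rightarrow>
    dart_term \<Rightarrow> dart_term \<Rightarrow> dart_term \<Rightarrow> dart_term \<Rightarrow> query" where
  "pentagram_cond_q r1 r2 r3 r4 r5 x1 x2 x3 x4 = (let rs = [r1, r2, r3, r4] in
     QAnd (q_conj [QNot (Same_vertex x1 r5), QNot (Same_vertex x1 r2), QNot (Same_vertex x2 r1),
         QNot (Same_vertex x2 r3), QNot (Same_vertex x3 r2), QNot (Same_vertex x3 r4),
         QNot (Same_vertex x4 r3), QNot (Same_vertex x4 r5), distinct_q [x1, x2, x3, x4],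
         small_q r5, small_q x1, small_q x2, small_q x3, small_q x4])
       (q_conj [QNot (adj_q x1 x2), QNot (adj_q x1 x3), QNot (adj_q x1 x4), QNot (adj_q x2 x3),
         QNot (adj_q x2 x4), QNot (adj_q x3 x4),
         QOr (no_big_nbr_q r5) (no_big_nbr_q x2), QOr (no_big_nbr_q x3) (no_big_nbr_q x4),
         QNot (Same_vertex x2 r5), QNot (adj_q x2 r5), no_2path_q x2 r5 rs, no_3path_q x2 r5 rs,
         facial_2paths_q x3 r3 r4 x4 rs, no_3path_q x3 x4 rs]))"

definition pentagram_q :: "dart_term \<Rightarrow> dart_term \<Rightarrow> dart_term \<Rightarrow> dart_term \<Rightarrow> dart_term \<Rightarrow> query" where
  "pentagram_q r1 r2 r3 r4 r5 = q_conj [deg3_q r2, deg3_q r3, deg3_q r4,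
     q_ex 60 (\<lambda>k1. q_ex 60 (\<lambda>k2. q_ex 60 (\<lambda>k3. q_ex 60 (\<lambda>k4.
       pentagram_cond_q r1 r2 r3 r4 r5 (nbr k1 r1) (nbr k2 r2) (nbr k3 r3) (nbr k4 r4)))))]"

context simple_rotation_system
begin

lemma holds_pentagram_cond_q:
  assumes d: "d \<in> darts G"
    and V: "vertex_of G d r1 = v1" "vertex_of G d r2 = v2" "vertex_of G d r3 = v3"
      "vertex_of G d r4 = v4" "vertex_of G d r5 = v5"
    and X: "vertex_of G d x1 = X1" "vertex_of G d x2 = X2" "vertex_of G d x3 = X3" "vertex_of G d x4 = X4"
  shows "holds G d (pentagram_cond_q r1 r2 r3 r4 r5 x1 x2 x3 x4) \<longleftrightarrow>
    X1 \<noteq> v5 \<and> X1 \<noteq> v2 \<and> X2 \<noteq> v1 \<and> X2 \<noteq> v3 \<and> X3 \<noteq> v2 \<and> X3 \<noteq> v4 \<and> X4 \<noteq> v3 \<and> X4 \<noteq> v5 \<and>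
    pentagram_cond G v1 v2 v3 v4 v5 X1 X2 X3 X4"
proof -
  let ?guard = "X1 \<noteq> v5 \<and> X1 \<noteq> v2 \<and> X2 \<noteq> v1 \<and> X2 \<noteq> v3 \<and> X3 \<noteq> v2 \<and> X3 \<noteq> v4 \<and> X4 \<noteq> v3 \<and> X4 \<noteq> v5 \<and>
    distinct [X1, X2, X3, X4] \<and> small G v5 \<and> small G X1 \<and> small G X2 \<and> small G X3 \<and> small G X4"
  have Vs: "set (map (vertex_of G d) [r1, r2, r3, r4]) = {v1, v2, v3, v4}" using V by simp
  show ?thesis
  proof (cases ?guard)
    case False
    then show ?thesis using d V X unfolding pentagram_cond_q_def pentagram_cond_def
      by (auto simp: Let_def)
  next
    case True
    show ?thesis
    proof (cases "(no_big_nb G v5 \<or> no_big_nb G X2) \<and> (no_big_nb G X3 \<or> no_big_nb G X4)")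
      case False
      then show ?thesis
        using d V X True holds_no_big_nbr_q[OF d]
        unfolding pentagram_cond_q_def pentagram_cond_def
        by (auto simp: Let_def)
    next
      case nb: True
      have "small G v5" "small G X1" "small G X2" "small G X3" "small G X4" using True by auto
      note smalls = this[folded V(5) X]
      have nb2: "no_big_nb G (vertex_of G d x2) \<or> no_big_nb G (vertex_of G d r5)"
        and nb3: "no_big_nb G (vertex_of G d x3) \<or> no_big_nb G (vertex_of G d x4)"
        using nb V(5) X by auto
      show ?thesis
        using d V X True nb holds_no_big_nbr_q[OF d] holds_adj_q[OF d] smalls Vs
          holds_no_2path_q[OF d smalls(3,1)] holds_no_3path_q[OF d smalls(3,1) nb2]
          holds_no_3path_q[OF d smalls(4,5) nb3] holds_facial_2paths_q[OF d smalls(4,5)]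
        unfolding pentagram_cond_q_def pentagram_cond_def
        by (simp add: Let_def)
    qed
  qed
qed

end

context rotation_system
begin

lemma ex_nbr_terms4_iff:
  assumes d: "d \<in> darts G" and deg: "\<And>r. r \<in> {ta, tb, tc, te} \<Longrightarrow> deg G (vertex_of G d r) \<le> 60"
  shows "(\<exists>k1<60. \<exists>k2<60. \<exists>k3<60. \<exists>k4<60. R (vertex_of G d (nbr k1 ta)) (vertex_of G d (nbr k2 tb))
        (vertex_of G d (nbr k3 tc)) (vertex_of G d (nbr k4 te))) \<longleftrightarrow>
    (\<exists>x1 x2 x3 x4. adj G (vertex_of G d ta) x1 \<and> adj G (vertex_of G d tb) x2 \<and>
        adj G (vertex_of G d tc) x3 \<and> adj G (vertex_of G d te) x4 \<and> R x1 x2 x3 x4)"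
proof -
  let ?X = "\<lambda>k r. vertex_of G d (nbr k r)" and ?A = "\<lambda>r. adj G (vertex_of G d r)"
  have "(\<exists>k4<60. R a b c (?X k4 te)) \<longleftrightarrow> (\<exists>x4. ?A te x4 \<and> R a b c x4)" for a b c
    by (rule ex_nbr_terms_iff[OF d deg]) simp
  moreover have "(\<exists>k3<60. \<exists>x4. ?A te x4 \<and> R a b (?X k3 tc) x4) \<longleftrightarrow>
      (\<exists>x3. ?A tc x3 \<and> (\<exists>x4. ?A te x4 \<and> R a b x3 x4))" for a b
    by (rule ex_nbr_terms_iff[OF d deg]) simp
  moreover have "(\<exists>k2<60. \<exists>x3. ?A tc x3 \<and> (\<exists>x4. ?A te x4 \<and> R a (?X k2 tb) x3 x4)) \<longleftrightarrow>
      (\<exists>x2. ?A tb x2 \<and> (\<exists>x3. ?A tc x3 \<and> (\<exists>x4. ?A te x4 \<and> R a x2 x3 x4)))" for a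
    by (rule ex_nbr_terms_iff[OF d deg]) simp
  moreover have "(\<exists>k1<60. \<exists>x2. ?A tb x2 \<and> (\<exists>x3. ?A tc x3 \<and> (\<exists>x4. ?A te x4 \<and> R (?X k1 ta) x2 x3 x4)))
      \<longleftrightarrow> (\<exists>x1. ?A ta x1 \<and> (\<exists>x2. ?A tb x2 \<and> (\<exists>x3. ?A tc x3 \<and> (\<exists>x4. ?A te x4 \<and> R x1 x2 x3 x4))))"
    by (rule ex_nbr_terms_iff[OF d deg]) simp
  ultimately show ?thesis by simp
qed

end

context triangle_free_rotation_system
begin

lemma holds_pentagram_q:
  assumes d: "d \<in> darts G" and f: "facial G [v1, v2, v3, v4, v5]" and dg: "deg G v1 = 3"
    and V: "vertex_of G d r1 = v1" "vertex_of G d r2 = v2" "vertex_of G d r3 = v3"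
      "vertex_of G d r4 = v4" "vertex_of G d r5 = v5"
  shows "holds G d (pentagram_q r1 r2 r3 r4 r5) \<longleftrightarrow> secure_pentagram G v1 v2 v3 v4 v5"
proof (cases "deg G v2 = 3 \<and> deg G v3 = 3 \<and> deg G v4 = 3")
  case False
  then show ?thesis using d V unfolding pentagram_q_def secure_pentagram_iff[OF f dg] by auto
next
  case True
  let ?R = "\<lambda>x1 x2 x3 x4. other_nb G v1 v5 v2 x1 \<and> other_nb G v2 v1 v3 x2 \<and>
    other_nb G v3 v2 v4 x3 \<and> other_nb G v4 v3 v5 x4 \<and> pentagram_cond G v1 v2 v3 v4 v5 x1 x2 x3 x4"
  let ?X = "\<lambda>k r. vertex_of G d (nbr k r)"
  have "adj G v1 (?X k r1)" "adj G v2 (?X k r2)" "adj G v3 (?X k r3)" "adj G v4 (?X k r4)" for k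
    using vertex_of_nbr_adj[OF d] V by metis+
  then have "holds G d (pentagram_cond_q r1 r2 r3 r4 r5 (nbr k1 r1) (nbr k2 r2) (nbr k3 r3) (nbr k4 r4)) \<longleftrightarrow>
      ?R (?X k1 r1) (?X k2 r2) (?X k3 r3) (?X k4 r4)" for k1 k2 k3 k4
    unfolding holds_pentagram_cond_q[OF d V refl refl refl refl] other_nb_def by blast
  then have "holds G d (pentagram_q r1 r2 r3 r4 r5) \<longleftrightarrow>
      (\<exists>k1<60. \<exists>k2<60. \<exists>k3<60. \<exists>k4<60. ?R (?X k1 r1) (?X k2 r2) (?X k3 r3) (?X k4 r4))"
    unfolding pentagram_q_def using d V True by (simp del: dart_of_nbr)
  also have "\<dots> \<longleftrightarrow> (\<exists>x1 x2 x3 x4. adj G v1 x1 \<and> adj G v2 x2 \<and> adj G v3 x3 \<and> adj G v4 x4 \<and>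
      ?R x1 x2 x3 x4)"
  proof -
    have "deg G (vertex_of G d r) \<le> 60" if "r \<in> {r1, r2, r3, r4}" for r
      using that dg True V by auto
    from ex_nbr_terms4_iff[where ta = r1 and tb = r2 and tc = r3 and te = r4 and R = ?R, OF d this]
    show ?thesis unfolding V .
  qed
  also have "\<dots> \<longleftrightarrow> secure_pentagram G v1 v2 v3 v4 v5"
    unfolding secure_pentagram_iff[OF f dg] other_nb_def using True by blast
  finally show ?thesis .
qed

end

context rotation_system
begin

lemma holds_multigram4_q:
  assumes d: "d \<in> darts G" and dg: "deg G (tail G d) = 3"
    and Q: "\<And>a b c e. facial G [vertex_of G d a, vertex_of G d b, vertex_of G d c, vertex_of G d e] \<Longrightarrow>
       deg G (vertex_of G d a) = 3 \<Longrightarrow>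
       holds G d (Q a b c e) \<longleftrightarrow> P (vertex_of G d a) (vertex_of G d b) (vertex_of G d c) (vertex_of G d e)"
    and P_facial: "\<And>a b c e. P a b c e \<Longrightarrow> facial G [a, b, c, e]"
  shows "holds G d (multigram_q 4 (\<lambda>ts. Q (ts ! 0) (ts ! 1) (ts ! 2) (ts ! 3))) \<longleftrightarrow>
    (\<exists>b c e. P (tail G d) b c e)"
proof -
  let ?S = "\<lambda>vs. \<exists>a b c e. vs = [a, b, c, e] \<and> P a b c e"
  have "holds G d (multigram_q 4 (\<lambda>ts. Q (ts ! 0) (ts ! 1) (ts ! 2) (ts ! 3))) \<longleftrightarrow>
      (\<exists>vs. length vs = 4 \<and> hd vs = tail G d \<and> ?S vs)"
  proof (rule holds_multigram_q[OF d])
    fix ts assume ts: "length ts = 4" "vertex_of G d (hd ts) = tail G d" "facial G (map (vertex_of G d) ts)"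
    then obtain a b c e where "ts = [a, b, c, e]" by (auto simp: numeral_eq_Suc length_Suc_conv)
    then show "holds G d (Q (ts ! 0) (ts ! 1) (ts ! 2) (ts ! 3)) \<longleftrightarrow> ?S (map (vertex_of G d) ts)"
      using Q ts dg by auto
  qed (use dg P_facial in auto)
  also have "\<dots> \<longleftrightarrow> (\<exists>b c e. P (tail G d) b c e)"
  proof
    assume "\<exists>b c e. P (tail G d) b c e"
    then obtain b c e where "P (tail G d) b c e" by blast
    then show "\<exists>vs. length vs = 4 \<and> hd vs = tail G d \<and> ?S vs"
      by (intro exI[of _ "[tail G d, b, c, e]"]) auto
  qed (auto; blast)
  finally show ?thesis .
qed

lemma holds_multigram5_q:
  assumes d: "d \<in> darts G" and dg: "deg G (tail G d) = 3"
    and Q: "\<And>a b c e f. facial G [vertex_of G d a, vertex_of G d b, vertex_of G d c, vertex_of G d e,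
         vertex_of G d f] \<Longrightarrow>
       deg G (vertex_of G d a) = 3 \<Longrightarrow>
       holds G d (Q a b c e f) \<longleftrightarrow>
         P (vertex_of G d a) (vertex_of G d b) (vertex_of G d c) (vertex_of G d e) (vertex_of G d f)"
    and P_facial: "\<And>a b c e f. P a b c e f \<Longrightarrow> facial G [a, b, c, e, f]"
  shows "holds G d (multigram_q 5 (\<lambda>ts. Q (ts ! 0) (ts ! 1) (ts ! 2) (ts ! 3) (ts ! 4))) \<longleftrightarrow>
    (\<exists>b c e f. P (tail G d) b c e f)"
proof -
  let ?S = "\<lambda>vs. \<exists>a b c e f. vs = [a, b, c, e, f] \<and> P a b c e f"
  have "holds G d (multigram_q 5 (\<lambda>ts. Q (ts ! 0) (ts ! 1) (ts ! 2) (ts ! 3) (ts ! 4))) \<longleftrightarrow>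
      (\<exists>vs. length vs = 5 \<and> hd vs = tail G d \<and> ?S vs)"
  proof (rule holds_multigram_q[OF d])
    fix ts assume ts: "length ts = 5" "vertex_of G d (hd ts) = tail G d" "facial G (map (vertex_of G d) ts)"
    then obtain a b c e f where "ts = [a, b, c, e, f]" by (auto simp: numeral_eq_Suc length_Suc_conv)
    then show "holds G d (Q (ts ! 0) (ts ! 1) (ts ! 2) (ts ! 3) (ts ! 4)) \<longleftrightarrow> ?S (map (vertex_of G d) ts)"
      using Q ts dg by auto
  qed (use dg P_facial in auto)
  also have "\<dots> \<longleftrightarrow> (\<exists>b c e f. P (tail G d) b c e f)"
  proof
    assume "\<exists>b c e f. P (tail G d) b c e f"
    then obtain b c e f where "P (tail G d) b c e f" by blast
    then show "\<exists>vs. length vs = 5 \<and> hd vs = tail G d \<and> ?S vs"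
      by (intro exI[of _ "[tail G d, b, c, e, f]"]) auto
  qed (auto; blast)
  finally show ?thesis .
qed

lemma holds_multigram6_q:
  assumes d: "d \<in> darts G" and dg: "deg G (tail G d) = 3"
    and Q: "\<And>a b c e f g. facial G [vertex_of G d a, vertex_of G d b, vertex_of G d c, vertex_of G d e,
         vertex_of G d f, vertex_of G d g] \<Longrightarrow>
       deg G (vertex_of G d a) = 3 \<Longrightarrow>
       holds G d (Q a b c e f g) \<longleftrightarrow>
         P (vertex_of G d a) (vertex_of G d b) (vertex_of G d c) (vertex_of G d e) (vertex_of G d f)
           (vertex_of G d g)"
    and P_facial: "\<And>a b c e f g. P a b c e f g \<Longrightarrow> facial G [a, b, c, e, f, g]"
  shows "holds G d (multigram_q 6 (\<lambda>ts. Q (ts ! 0) (ts ! 1) (ts ! 2) (ts ! 3) (ts ! 4) (ts ! 5))) \<longleftrightarrow>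
    (\<exists>b c e f g. P (tail G d) b c e f g)"
proof -
  let ?S = "\<lambda>vs. \<exists>a b c e f g. vs = [a, b, c, e, f, g] \<and> P a b c e f g"
  have "holds G d (multigram_q 6 (\<lambda>ts. Q (ts ! 0) (ts ! 1) (ts ! 2) (ts ! 3) (ts ! 4) (ts ! 5))) \<longleftrightarrow>
      (\<exists>vs. length vs = 6 \<and> hd vs = tail G d \<and> ?S vs)"
  proof (rule holds_multigram_q[OF d])
    fix ts assume ts: "length ts = 6" "vertex_of G d (hd ts) = tail G d" "facial G (map (vertex_of G d) ts)"
    then obtain a b c e f g where "ts = [a, b, c, e, f, g]" by (auto simp: numeral_eq_Suc length_Suc_conv)
    then show "holds G d (Q (ts ! 0) (ts ! 1) (ts ! 2) (ts ! 3) (ts ! 4) (ts ! 5)) \<longleftrightarrow>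
        ?S (map (vertex_of G d) ts)"
      using Q ts dg by auto
  qed (use dg P_facial in auto)
  also have "\<dots> \<longleftrightarrow> (\<exists>b c e f g. P (tail G d) b c e f g)"
  proof
    assume "\<exists>b c e f g. P (tail G d) b c e f g"
    then obtain b c e f g where "P (tail G d) b c e f g" by blast
    then show "\<exists>vs. length vs = 6 \<and> hd vs = tail G d \<and> ?S vs"
      by (intro exI[of _ "[tail G d, b, c, e, f, g]"]) auto
  qed (auto; blast)
  finally show ?thesis .
qed

end

definition tetragrams_q :: query where
  "tetragrams_q = multigram_q 4 (\<lambda>ts. tetragram_q (ts ! 0) (ts ! 1) (ts ! 2) (ts ! 3))"

definition octagrams_q :: query where
  "octagrams_q = multigram_q 4 (\<lambda>ts. octagram_q (ts ! 0) (ts ! 1) (ts ! 2) (ts ! 3))"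

definition pentagrams_q :: query where
  "pentagrams_q = multigram_q 5 (\<lambda>ts. pentagram_q (ts ! 0) (ts ! 1) (ts ! 2) (ts ! 3) (ts ! 4))"

definition decagrams_q :: query where
  "decagrams_q = multigram_q 5 (\<lambda>ts. decagram_q (ts ! 0) (ts ! 1) (ts ! 2) (ts ! 3) (ts ! 4))"

definition hexagrams_q :: query where
  "hexagrams_q = multigram_q 6 (\<lambda>ts. hexagram_q (ts ! 0) (ts ! 1) (ts ! 2) (ts ! 5))"

definition secure_multigram_q :: query where
  "secure_multigram_q = QOr (deg_le2_q Start) (QAnd (deg3_q Start)
     (QOr tetragrams_q (QOr octagrams_q (QOr pentagrams_q (QOr decagrams_q hexagrams_q)))))"

context triangle_free_rotation_system
begin

context
  fixes d
  assumes d: "d \<in> darts G" and dg: "deg G (tail G d) = 3"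
begin

lemma holds_tetragrams_q: "holds G d tetragrams_q \<longleftrightarrow> (\<exists>v2 v3 v4. secure_tetragram G (tail G d) v2 v3 v4)"
  unfolding tetragrams_q_def
  by (rule holds_multigram4_q[OF d dg, of tetragram_q "secure_tetragram G",
        OF holds_tetragram_q[OF d _ _ refl refl refl refl]])
    (auto simp: secure_tetragram_def tetragram_def)

lemma holds_octagrams_q: "holds G d octagrams_q \<longleftrightarrow> (\<exists>v2 v3 v4. secure_octagram G (tail G d) v2 v3 v4)"
  unfolding octagrams_q_def
  by (rule holds_multigram4_q[OF d dg, of octagram_q "secure_octagram G",
        OF holds_octagram_q[OF d _ _ refl refl refl]])
    (auto simp: secure_octagram_def octagram_def tetragram_def)

lemma holds_pentagrams_q:
  "holds G d pentagrams_q \<longleftrightarrow> (\<exists>v2 v3 v4 v5. secure_pentagram G (tail G d) v2 v3 v4 v5)"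
  unfolding pentagrams_q_def
  by (rule holds_multigram5_q[OF d dg, of pentagram_q "secure_pentagram G",
        OF holds_pentagram_q[OF d _ _ refl refl refl refl refl]])
    (auto simp: secure_pentagram_def pentagram_def)

lemma holds_decagrams_q:
  "holds G d decagrams_q \<longleftrightarrow> (\<exists>v2 v3 v4 v5. secure_decagram G (tail G d) v2 v3 v4 v5)"
  unfolding decagrams_q_def
  by (rule holds_multigram5_q[OF d dg, of decagram_q "secure_decagram G",
        OF holds_decagram_q[OF d _ _ refl refl refl refl refl]])
    (auto simp: secure_decagram_def decagram_def pentagram_def)

lemma holds_hexagrams_q:
  "holds G d hexagrams_q \<longleftrightarrow> (\<exists>v2 v3 v4 v5 v6. secure_hexagram G (tail G d) v2 v3 v4 v5 v6)"
  unfolding hexagrams_q_def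
  by (rule holds_multigram6_q[OF d dg, of "\<lambda>a b c e f g. hexagram_q a b c g" "secure_hexagram G",
        OF holds_hexagram_q[OF d _ _ refl refl refl refl]])
    (auto simp: secure_hexagram_def hexagram_def)

end

lemma holds_secure_multigram_q:
  assumes d: "d \<in> darts G"
  shows "holds G d secure_multigram_q \<longleftrightarrow> has_secure_multigram G (tail G d)"
proof (cases "deg G (tail G d) = 3")
  case True
  then show ?thesis
    unfolding secure_multigram_q_def has_secure_multigram_def monogram_def holds.simps
      holds_tetragrams_q[OF d True] holds_octagrams_q[OF d True] holds_pentagrams_q[OF d True]
      holds_decagrams_q[OF d True] holds_hexagrams_q[OF d True] holds_deg_le2_q[OF d] holds_deg3_q[OF d]
    by simp
next
  case False
  then have "\<not> (\<exists>v2 v3 v4. secure_tetragram G (tail G d) v2 v3 v4) \<and>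
      \<not> (\<exists>v2 v3 v4. secure_octagram G (tail G d) v2 v3 v4) \<and>
      \<not> (\<exists>v2 v3 v4 v5. secure_pentagram G (tail G d) v2 v3 v4 v5) \<and>
      \<not> (\<exists>v2 v3 v4 v5. secure_decagram G (tail G d) v2 v3 v4 v5) \<and>
      \<not> (\<exists>v2 v3 v4 v5 v6. secure_hexagram G (tail G d) v2 v3 v4 v5 v6)"
    unfolding secure_tetragram_def secure_octagram_def octagram_def secure_pentagram_def
      pentagram_def secure_decagram_def decagram_def secure_hexagram_def by blast
  then show ?thesis
    unfolding secure_multigram_q_def has_secure_multigram_def monogram_def
    using False d dart_facts(6)[OF d] holds_deg_le2_q[OF d, of Start] by auto
qed

end

theorem lemma4p2:
  "\<exists>T :: qtree. \<forall>(G :: ('v, 'd) rotsys) v ds.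
     plane_rotsys G \<and> triangle_free G \<and> v \<in> verts G \<and> start_state G v ds \<longrightarrow>
     (run G T ds \<longleftrightarrow> has_secure_multigram G v)"
proof (intro exI allI impI)
  fix G :: "('v, 'd) rotsys" and v ds
  assume H: "plane_rotsys G \<and> triangle_free G \<and> v \<in> verts G \<and> start_state G v ds"
  then interpret triangle_free_rotation_system G
    by unfold_locales (auto simp: plane_rotsys_def)
  show "run G (IsNil (Leaf True) (decide secure_multigram_q)) ds \<longleftrightarrow> has_secure_multigram G v"
  proof (cases "ds = []")
    case True
    then have "{d \<in> darts G. tail G d = v} = {}" using H unfolding start_state_def by auto
    then have "deg G v = 0" unfolding deg_def by (metis card.empty)
    then show ?thesis using True H unfolding has_secure_multigram_def monogram_def by simp
  next
    case False
    then obtain d where d: "d \<in> darts G" "tail G d = v" "ds = [d]" using H unfolding start_state_def by auto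
    have "run G (decide secure_multigram_q) [d] \<longleftrightarrow> has_secure_multigram G v"
      unfolding run_decide holds_secure_multigram_q[OF d(1)] d(2) ..
    then show ?thesis using d(3) by simp
  qed
qed

end
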